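(* Let $\mathcal H$ be a family of graphs. The following are equivalent: (i) there is a constant $c=c(\mathcal H)$ such that every (not necessarily connected) $\mathcal H$-free graph $G$ has fewer than $c$ vertices $v$ with $\mathrm{sdeg}(v)\ge 2$; (ii) there is a positive integer $n$ such that $\mathcal H\le \{K_n^*,\ nP_3,\ K_{1,n}^*\}$.
   Context: All graphs are finite, simple, undirected. For graphs $H_1,H_2$, write $H_1\prec H_2$ if $H_2$ contains an induced subgraph isomorphic to $H_1$. A graph $G$ is $\mathcal H$-free if no $H\in\mathcal H$ satisfies $H\prec G$. For families $\mathcal H_1,\mathcal H_2$, write $\mathcal H_1\le\mathcal H_2$ if for every $H_2\in\mathcal H_2$ there is $H_1\in\mathcal H_1$ with $H_1\prec H_2$. For a vertex $v$ of $G$, the sharp degree is $\mathrm{sdeg}(v)=c(G-v)-c(G)+1$, where $c(\cdot)$ is the number of connected components. $P_3$ is the path on $3$ vertices; $nG$ is the disjoint union of $n$ copies of $G$. $K_{1,n}^*$ is obtained from the star $K_{1,n}$ by attaching a new pendant vertex to each leaf; $K_n^*$ is obtained from $K_n$ by attaching a new pendant vertex to each vertex. *)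

theory Defs
  imports Main
begin

type_synonym 'a graph = "'a set \<times> 'a set set"

definition verts :: "'a graph \<Rightarrow> 'a set" where "verts G = fst G"
definition edges :: "'a graph \<Rightarrow> 'a set set" where "edges G = snd G"

definition wf_graph :: "'a graph \<Rightarrow> bool" where
  "wf_graph G \<longleftrightarrow> finite (verts G) \<and>
     (\<forall>e\<in>edges G. \<exists>u v. u \<noteq> v \<and> e = {u, v} \<and> u \<in> verts G \<and> v \<in> verts G)"

definition induced_sub :: "'a graph \<Rightarrow> 'b graph \<Rightarrow> bool" (infix "\<prec>" 50) where
  "H \<prec> G \<longleftrightarrow> (\<exists>f. inj_on f (verts H) \<and> f ` verts H \<subseteq> verts G \<and>
     (\<forall>u\<in>verts H. \<forall>v\<in>verts H. {u, v} \<in> edges H \<longleftrightarrow> {f u, f v} \<in> edges G))"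

definition H_free :: "'a graph set \<Rightarrow> 'b graph \<Rightarrow> bool" where
  "H_free \<H> G \<longleftrightarrow> (\<forall>H\<in>\<H>. \<not> H \<prec> G)"

definition family_le :: "'a graph set \<Rightarrow> 'b graph set \<Rightarrow> bool" where
  "family_le \<H>1 \<H>2 \<longleftrightarrow> (\<forall>H2\<in>\<H>2. \<exists>H1\<in>\<H>1. H1 \<prec> H2)"

definition adj :: "'a graph \<Rightarrow> 'a \<Rightarrow> 'a \<Rightarrow> bool" where
  "adj G u v \<longleftrightarrow> {u, v} \<in> edges G"

definition components :: "'a graph \<Rightarrow> 'a set set" where
  "components G = (\<lambda>v. {w \<in> verts G. (adj G)\<^sup>*\<^sup>* v w}) ` verts G"

definition num_components :: "'a graph \<Rightarrow> nat" where
  "num_components G = card (components G)"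

definition delete_vertex :: "'a graph \<Rightarrow> 'a \<Rightarrow> 'a graph" where
  "delete_vertex G v = (verts G - {v}, {e \<in> edges G. v \<notin> e})"

definition sdeg :: "'a graph \<Rightarrow> 'a \<Rightarrow> int" where
  "sdeg G v = int (num_components (delete_vertex G v)) - int (num_components G) + 1"

text \<open>K_n^*: clique on 0..n-1, vertex n+i pendant at i.\<close>
definition Kn_star :: "nat \<Rightarrow> nat graph" where
  "Kn_star n = ({0..<2*n},
     {{i, j} | i j. i < n \<and> j < n \<and> i \<noteq> j} \<union> {{i, n + i} | i. i < n})"

definition nP3 :: "nat \<Rightarrow> nat graph" where
  "nP3 n = ({0..<3*n},
     {{3*i, 3*i+1} | i. i < n} \<union> {{3*i+1, 3*i+2} | i. i < n})"

text \<open>K_{1,n}^*: centre 0, leaves 1..n, vertex n+i pendant at leaf i.\<close>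
definition K1n_star :: "nat \<Rightarrow> nat graph" where
  "K1n_star n = ({0..2*n},
     {{0, i} | i. 1 \<le> i \<and> i \<le> n} \<union> {{i, n + i} | i. 1 \<le> i \<and> i \<le> n})"

end

theory Submission
  imports Defs "HOL-Library.Ramsey"
begin

text \<open>
  Each obstruction K_n^*, nP_3, K_{1,n}^* has at least n cut vertices (vertices of sharp degree
  at least 2), so a uniform bound c on the number of cut vertices of H-free graphs forces every
  obstruction of order max c 2 to contain a member of H.

  Conversely, let G have many cut vertices. Every cut vertex is the middle of an induced P_3
  whose ends it separates, so cut vertices in n different components give nP_3. Otherwise one
  component contains many of them; fix a root r there and measure levels by the distance from r.
  For a cut vertex s other than r let parent s precede s on a shortest path from r, and let
  beyond s be a neighbour that s separates from r: it lies one level further from r than s and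
  is adjacent to no other vertex at most as far from r as s. Cut vertices on n levels pairwise 4
  apart give an nP_3 formed by the paths parent s - s - beyond s. Otherwise a single level
  carries many cut vertices, and Ramsey's theorem yields a large clique among them (giving K_n^*
  with the pendants beyond s) or a large independent set. In the latter case either one vertex
  is the parent of n of them (giving K_{1,n}^*), or a greedy selection keeps many whose parents
  are adjacent to none of the others, and Ramsey's theorem applied to these parents gives K_n^*
  or nP_3.
\<close>

text \<open>\<open>HOL-Library.Ramsey\<close> brings \<open>\<prec>\<close> for \<open>lesspoll\<close>; here it denotes induced subgraphs.\<close>
no_notation lesspoll (infixl \<open>\<prec>\<close> 50)

lemma card_image_le_if_factors:
  assumes "finite A" "\<forall>u\<in>A. \<forall>v\<in>A. g u = g v \<longrightarrow> f u = f v"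
  shows "card (f ` A) \<le> card (g ` A)"
proof -
  define h where "h z = f (inv_into A g z)" for z
  have "f u = h (g u)" if "u \<in> A" for u
  proof -
    have "inv_into A g (g u) \<in> A" "g (inv_into A g (g u)) = g u"
      using that by (simp_all add: inv_into_into f_inv_into_f)
    then show ?thesis using assms(2) that unfolding h_def by metis
  qed
  then have "f ` A = h ` g ` A"
    unfolding image_image by (rule image_cong[OF refl])
  then show ?thesis
    using card_image_le[of "g ` A" h] assms(1) by simp
qed

lemma card_image_less_if_factors:
  assumes "finite A" "\<forall>u\<in>A. \<forall>v\<in>A. g u = g v \<longrightarrow> f u = f v"
    and "x \<in> A" "y \<in> A" "f x = f y" "g x \<noteq> g y"
  shows "card (f ` A) < card (g ` A)"
proof -
  define A' where "A' = {a \<in> A. g a \<noteq> g y}"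
  have "f u \<in> f ` A'" if "u \<in> A" for u
  proof (cases "g u = g y")
    case True
    then have "f u = f y" using assms(2,4) that by blast
    then have "f u = f x" using assms(5) by simp
    then show ?thesis using assms(3,6) unfolding A'_def by blast
  next
    case False
    then show ?thesis using that unfolding A'_def by blast
  qed
  then have "f ` A = f ` A'" unfolding A'_def by blast
  also have "card (f ` A') \<le> card (g ` A')"
    using assms(1,2) unfolding A'_def by (intro card_image_le_if_factors) auto
  also have "\<dots> < card (g ` A)"
  proof (rule psubset_card_mono)
    have "g y \<notin> g ` A'" unfolding A'_def by auto
    then show "g ` A' \<subset> g ` A" using assms(4) unfolding A'_def by blast
  qed (use assms(1) in simp)
  finally show ?thesis .
qed

lemma obtain_enumeration:
  assumes "finite Y" "card Y = n"
  obtains h where "\<And>i. i < n \<Longrightarrow> h i \<in> Y" "inj_on h {..<n}"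
proof -
  obtain h where "bij_betw h {0..<n} Y"
    using ex_bij_betw_nat_finite[OF assms(1)] assms(2) by blast
  then show ?thesis
    using that by (auto simp: bij_betw_def atLeast0LessThan)
qed

lemma card_le_card_image_mult:
  assumes "finite A" "\<And>y. y \<in> g ` A \<Longrightarrow> card {x\<in>A. g x = y} \<le> q"
  shows "card A \<le> card (g ` A) * q"
proof -
  have "A = (\<Union>y\<in>g ` A. {x\<in>A. g x = y})" by auto
  then have "card A \<le> (\<Sum>y\<in>g ` A. card {x\<in>A. g x = y})"
    by (metis card_UN_le assms(1) finite_imageI)
  also have "\<dots> \<le> card (g ` A) * q"
    using sum_bounded_above[of "g ` A" "\<lambda>y. card {x\<in>A. g x = y}" q] assms(2) by simp
  finally show ?thesis .
qed

lemma obtain_spread_subset: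
  fixes X :: "nat set"
  assumes "finite X" "g * k \<le> card X" "0 < g"
  obtains Y where "Y \<subseteq> X" "card Y = k" "\<And>x y. x \<in> Y \<Longrightarrow> y \<in> Y \<Longrightarrow> x \<noteq> y \<Longrightarrow> x + g \<le> y \<or> y + g \<le> x"
  using assms(1,2)
proof (induction k arbitrary: X thesis)
  case 0
  then show ?case by (metis card.empty empty_iff empty_subsetI)
next
  case (Suc k)
  have "X \<noteq> {}" using Suc.prems(3) assms(3) by auto
  define m where "m = Max X"
  have m: "m \<in> X" "\<And>x. x \<in> X \<Longrightarrow> x \<le> m"
    using Suc.prems(2) \<open>X \<noteq> {}\<close> by (simp_all add: m_def)
  define X' where "X' = {x\<in>X. x + g \<le> m}"
  have "X - X' \<subseteq> {m + 1 - g..m}"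
  proof
    fix x assume "x \<in> X - X'"
    then have "x \<le> m" "m < x + g" using m(2) by (auto simp: X'_def)
    then show "x \<in> {m + 1 - g..m}" by simp
  qed
  then have "card (X - X') \<le> card {m + 1 - g..m}"
    by (rule card_mono[OF finite_atLeastAtMost])
  also have "\<dots> \<le> g" by simp
  finally have "card (X - X') \<le> g" .
  moreover have "X = X' \<union> (X - X')" by (auto simp: X'_def)
  then have "card X \<le> card X' + card (X - X')"
    by (metis card_Un_le)
  ultimately have "g * k \<le> card X'"
    using Suc.prems(3) by simp
  moreover have "finite X'" using Suc.prems(2) by (simp add: X'_def)
  ultimately obtain Y where Y: "Y \<subseteq> X'" "card Y = k"
    "\<And>x y. x \<in> Y \<Longrightarrow> y \<in> Y \<Longrightarrow> x \<noteq> y \<Longrightarrow> x + g \<le> y \<or> y + g \<le> x"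
    using Suc.IH by blast
  have below: "y + g \<le> m" if "y \<in> Y" for y
    using that Y(1) by (simp add: X'_def subset_iff)
  then have "m \<notin> Y" using assms(3) by fastforce
  moreover have "finite Y" using Y(1) \<open>finite X'\<close> finite_subset by blast
  ultimately show ?case
    using Suc.prems(1)[of "insert m Y"] Y m(1) below \<open>m \<notin> Y\<close> X'_def by fastforce
qed

lemma sum_card_out_eq_sum_card_in:
  assumes "finite X"
  shows "(\<Sum>x\<in>X. card {y\<in>X. C x y}) = (\<Sum>x\<in>X. card {y\<in>X. C y x})"
proof -
  have "(\<Sum>x\<in>X. card {y\<in>X. C x y}) = card (Sigma X (\<lambda>x. {y\<in>X. C x y}))"
    using assms by (simp add: card_SigmaI)
  also have "\<dots> = card ((\<lambda>(x, y). (y, x)) ` Sigma X (\<lambda>x. {y\<in>X. C x y}))"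
    by (rule card_image[symmetric]) (auto simp: inj_on_def)
  also have "(\<lambda>(x, y). (y, x)) ` Sigma X (\<lambda>x. {y\<in>X. C x y}) = Sigma X (\<lambda>x. {y\<in>X. C y x})"
    by auto
  also have "card \<dots> = (\<Sum>x\<in>X. card {y\<in>X. C y x})"
    using assms by (simp add: card_SigmaI)
  finally show ?thesis .
qed

lemma exists_small_total_degree:
  assumes "finite X" "X \<noteq> {}" "\<forall>x\<in>X. card {y\<in>X. C x y} \<le> k"
  shows "\<exists>x\<in>X. card {y\<in>X. C x y} + card {y\<in>X. C y x} \<le> 2 * k"
proof (rule ccontr)
  assume small: "\<not> ?thesis"
  let ?out = "\<lambda>x. card {y\<in>X. C x y}" and ?in = "\<lambda>x. card {y\<in>X. C y x}"
  have "2 * k < ?out x + ?in x" if "x \<in> X" for x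
    using small that by (simp add: not_le)
  then have "(\<Sum>x\<in>X. 2 * k) < (\<Sum>x\<in>X. ?out x + ?in x)"
    by (rule sum_strict_mono[OF assms(1,2)])
  also have "\<dots> = (\<Sum>x\<in>X. ?out x) + (\<Sum>x\<in>X. ?in x)"
    by (rule sum.distrib)
  also have "\<dots> = (\<Sum>x\<in>X. ?out x) + (\<Sum>x\<in>X. ?out x)"
    using sum_card_out_eq_sum_card_in[OF assms(1), of C, symmetric] by (rule arg_cong)
  also have "\<dots> \<le> (\<Sum>x\<in>X. k) + (\<Sum>x\<in>X. k)"
    using assms(3) by (intro add_mono sum_mono) auto
  finally show False by simp
qed

text \<open>Greedy selection: keep a vertex of total degree at most 2k, discard its neighbours
  and recurse.\<close>
lemma bounded_outdegree_independent_subset: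
  assumes "finite X" "\<forall>x\<in>X. card {y\<in>X. C x y} \<le> k"
  shows "\<exists>J\<subseteq>X. card X \<le> card J * (2 * k + 1) \<and> (\<forall>x\<in>J. \<forall>y\<in>J. x \<noteq> y \<longrightarrow> \<not> C x y)"
  using assms
proof (induction "card X" arbitrary: X rule: less_induct)
  case less
  show ?case
  proof (cases "X = {}")
    case False
    then obtain x where x: "x \<in> X" "card {y\<in>X. C x y} + card {y\<in>X. C y x} \<le> 2 * k"
      using exists_small_total_degree less.prems by blast
    define N where "N = insert x ({y\<in>X. C x y} \<union> {y\<in>X. C y x})"
    have "finite N" using less.prems(1) by (simp add: N_def)
    have "card N \<le> Suc (card ({y\<in>X. C x y} \<union> {y\<in>X. C y x}))"
      unfolding N_def using less.prems(1) by (simp add: card_insert_if)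
    also have "\<dots> \<le> Suc (card {y\<in>X. C x y} + card {y\<in>X. C y x})"
      using card_Un_le by simp
    finally have card_N: "card N \<le> 2 * k + 1" using x(2) by simp
    define X' where "X' = X - N"
    have "finite X'" "card X' < card X"
      using less.prems(1) x(1) unfolding X'_def N_def by (auto intro: psubset_card_mono)
    have deg: "\<forall>z\<in>X'. card {y\<in>X'. C z y} \<le> k"
    proof
      fix z assume "z \<in> X'"
      have "card {y\<in>X'. C z y} \<le> card {y\<in>X. C z y}"
        by (rule card_mono) (use less.prems(1) in \<open>auto simp: X'_def\<close>)
      also have "\<dots> \<le> k" using less.prems(2) \<open>z \<in> X'\<close> by (simp add: X'_def)
      finally show "card {y\<in>X'. C z y} \<le> k" .
    qed
    obtain J where J: "J \<subseteq> X'" "card X' \<le> card J * (2 * k + 1)"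
      "\<forall>a\<in>J. \<forall>b\<in>J. a \<noteq> b \<longrightarrow> \<not> C a b"
      using less.hyps[OF \<open>card X' < card X\<close> \<open>finite X'\<close> deg] by blast
    have "x \<notin> J" "finite J" using J(1) \<open>finite X'\<close> finite_subset unfolding X'_def N_def by auto
    have "card X \<le> card (X' \<union> N)"
      by (rule card_mono) (use \<open>finite X'\<close> \<open>finite N\<close> in \<open>auto simp: X'_def\<close>)
    also have "\<dots> \<le> card X' + card N" by (rule card_Un_le)
    finally have "card X \<le> card X' + card N" .
    then have "card X \<le> card (insert x J) * (2 * k + 1)"
      using J(2) card_N \<open>x \<notin> J\<close> \<open>finite J\<close> by simp
    moreover have "\<not> C x c \<and> \<not> C c x" if "c \<in> J" for c
      using that J(1) unfolding X'_def N_def by blast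
    ultimately show ?thesis
      using J(1,3) x(1) unfolding X'_def by (intro exI[of _ "insert x J"]) auto
  qed simp
qed

section \<open>Connectivity and sharp degree\<close>

lemma adj_commute: "adj G u v \<longleftrightarrow> adj G v u"
  by (simp add: adj_def insert_commute)

lemma symp_adj: "symp (adj G)"
  by (rule sympI) (simp add: adj_commute)

lemma adj_delete_vertex: "adj (delete_vertex G s) u v \<longleftrightarrow> adj G u v \<and> u \<noteq> s \<and> v \<noteq> s"
  by (auto simp: adj_def delete_vertex_def edges_def)

lemma verts_delete_vertex: "verts (delete_vertex G s) = verts G - {s}"
  by (simp add: delete_vertex_def verts_def)

lemma reach_delete_vertex_avoids:
  "(adj (delete_vertex G s))\<^sup>*\<^sup>* a b \<Longrightarrow> a \<noteq> s \<Longrightarrow> b \<noteq> s"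
  by (induction rule: rtranclp_induct) (auto simp: adj_delete_vertex)

lemma reach_delete_vertex_cases:
  assumes "(adj G)\<^sup>*\<^sup>* x y" "x \<noteq> s"
  shows "(adj (delete_vertex G s))\<^sup>*\<^sup>* x y \<or> y = s \<or>
    (\<exists>z. (adj G)\<^sup>*\<^sup>* x s \<and> adj G s z \<and> z \<noteq> s \<and> (adj (delete_vertex G s))\<^sup>*\<^sup>* z y)"
  using assms(1)
proof (induction rule: rtranclp_induct)
  case base
  then show ?case by simp
next
  case (step u y)
  from step.IH show ?case
  proof (elim disjE exE conjE)
    assume h: "(adj (delete_vertex G s))\<^sup>*\<^sup>* x u"
    then have "u \<noteq> s" using reach_delete_vertex_avoids assms(2) by metis
    then show ?thesis using h step.hyps(2)
      by (metis adj_delete_vertex rtranclp.rtrancl_into_rtrancl)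
  next
    assume "u = s"
    then show ?thesis using step.hyps by (metis rtranclp.rtrancl_refl)
  next
    fix z
    assume h: "(adj G)\<^sup>*\<^sup>* x s" "adj G s z" "z \<noteq> s" "(adj (delete_vertex G s))\<^sup>*\<^sup>* z u"
    then have "u \<noteq> s" using reach_delete_vertex_avoids by metis
    then show ?thesis using h step.hyps(2)
      by (metis adj_delete_vertex rtranclp.rtrancl_into_rtrancl)
  qed
qed

definition component_of :: "'a graph \<Rightarrow> 'a \<Rightarrow> 'a set" where
  "component_of G v = {w \<in> verts G. (adj G)\<^sup>*\<^sup>* v w}"

lemma components_eq_image: "components G = component_of G ` verts G"
  by (simp add: components_def component_of_def)

definition cut_vertices :: "'a graph \<Rightarrow> 'a set" where
  "cut_vertices G = {v \<in> verts G. sdeg G v \<ge> 2}"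

lemma wf_graph_delete_vertex: "wf_graph G \<Longrightarrow> wf_graph (delete_vertex G s)"
  unfolding wf_graph_def delete_vertex_def verts_def edges_def by fastforce

locale simple_graph =
  fixes G :: "'a graph"
  assumes wf: "wf_graph G"
begin

lemma finite_verts: "finite (verts G)"
  using wf by (simp add: wf_graph_def)

lemma adj_imp_verts: "adj G u v \<Longrightarrow> u \<in> verts G \<and> v \<in> verts G \<and> u \<noteq> v"
  using wf unfolding wf_graph_def adj_def by (auto simp: doubleton_eq_iff)

lemma not_adj_self: "\<not> adj G u u"
  using adj_imp_verts by blast

abbreviation reach :: "'a \<Rightarrow> 'a \<Rightarrow> bool" where
  "reach \<equiv> (adj G)\<^sup>*\<^sup>*"

abbreviation reach_avoiding :: "'a \<Rightarrow> 'a \<Rightarrow> 'a \<Rightarrow> bool" where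
  "reach_avoiding s \<equiv> (adj (delete_vertex G s))\<^sup>*\<^sup>*"

lemma reach_sym: "reach x y \<Longrightarrow> reach y x"
  by (rule sympD[OF symp_rtranclp[OF symp_adj]])

lemma reach_avoiding_sym: "reach_avoiding s x y \<Longrightarrow> reach_avoiding s y x"
  by (rule sympD[OF symp_rtranclp[OF symp_adj]])

lemma reach_step: "reach x y \<Longrightarrow> adj G y z \<Longrightarrow> reach x z"
  by (rule rtranclp.rtrancl_into_rtrancl)

lemma reach_verts: "reach x y \<Longrightarrow> x \<in> verts G \<Longrightarrow> y \<in> verts G"
  by (induction rule: rtranclp_induct) (auto dest: adj_imp_verts)

lemma reach_avoiding_imp_reach: "reach_avoiding s x y \<Longrightarrow> reach x y"
  by (induction rule: rtranclp_induct) (auto simp: adj_delete_vertex)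

lemma reach_avoiding_step:
  "reach_avoiding s x y \<Longrightarrow> adj G y z \<Longrightarrow> y \<noteq> s \<Longrightarrow> z \<noteq> s \<Longrightarrow> reach_avoiding s x z"
  by (metis adj_delete_vertex rtranclp.rtrancl_into_rtrancl)

lemma component_of_eq_iff:
  assumes "u \<in> verts G"
  shows "component_of G u = component_of G v \<longleftrightarrow> reach u v"
proof
  assume "component_of G u = component_of G v"
  then have "reach v u" using assms unfolding component_of_def by blast
  then show "reach u v" by (rule reach_sym)
next
  assume "reach u v"
  then have "reach u w \<longleftrightarrow> reach v w" for w
    using reach_sym rtranclp_trans[of _ u v w] rtranclp_trans[of _ v u w] by blast
  then show "component_of G u = component_of G v"
    unfolding component_of_def by simp
qed

lemma component_of_delete_vertex_eq_iff:
  "u \<in> verts G - {s} \<Longrightarrow>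
    component_of (delete_vertex G s) u = component_of (delete_vertex G s) v \<longleftrightarrow> reach_avoiding s u v"
  using simple_graph.component_of_eq_iff[OF simple_graph.intro[OF wf_graph_delete_vertex[OF wf]]]
  by (simp add: verts_delete_vertex)

text \<open>If s lies on a path between two other vertices, the components of both G and G - s are
  represented by vertices other than s, and the sharp degree compares two equivalence relations
  on these vertices.\<close>
lemma sdeg_ge_2_iff_separates:
  "sdeg G s \<ge> 2 \<longleftrightarrow>
    (\<exists>x\<in>verts G - {s}. \<exists>y\<in>verts G - {s}. reach x y \<and> \<not> reach_avoiding s x y)"
  (is "_ \<longleftrightarrow> (\<exists>x\<in>?V. \<exists>y\<in>?V. ?sep x y)")
proof
  let ?C = "component_of G" and ?Cs = "component_of (delete_vertex G s)"
  have num_Cs: "num_components (delete_vertex G s) = card (?Cs ` ?V)"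
    by (simp add: num_components_def components_eq_image verts_delete_vertex)
  have num_C: "num_components G = card (?C ` verts G)"
    by (simp add: num_components_def components_eq_image)
  {
    assume "sdeg G s \<ge> 2"
    then have less: "card (?C ` verts G) < card (?Cs ` ?V)"
      using num_C num_Cs by (simp add: sdeg_def)
    show "\<exists>x\<in>?V. \<exists>y\<in>?V. ?sep x y"
    proof (rule ccontr)
      assume no_sep: "\<not> ?thesis"
      have factors: "\<forall>u\<in>?V. \<forall>v\<in>?V. ?C u = ?C v \<longrightarrow> ?Cs u = ?Cs v"
      proof (intro ballI impI)
        fix u v assume u: "u \<in> ?V" and v: "v \<in> ?V" and "?C u = ?C v"
        then have "reach u v" using component_of_eq_iff[of u v] by simp
        then have "reach_avoiding s u v" using no_sep u v by blast
        then show "?Cs u = ?Cs v" using component_of_delete_vertex_eq_iff[OF u] by simp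
      qed
      have "card (?Cs ` ?V) \<le> card (?C ` ?V)"
        using finite_verts by (intro card_image_le_if_factors[OF _ factors]) simp
      also have "\<dots> \<le> card (?C ` verts G)"
        using finite_verts by (intro card_mono) auto
      finally show False using less by simp
    qed
  next
    assume "\<exists>x\<in>?V. \<exists>y\<in>?V. ?sep x y"
    then obtain x y where x: "x \<in> ?V" and y: "y \<in> ?V" and sep: "?sep x y" by blast
    have "reach x s"
      using reach_delete_vertex_cases[of G x y s] sep x y by auto
    then have s: "s \<in> verts G" and "?C x = ?C s"
      using x reach_verts component_of_eq_iff[of x s] by simp_all
    then have "?C ` verts G = insert (?C x) (?C ` ?V)"
      by (metis image_insert insert_Diff)
    also have "\<dots> = ?C ` ?V"
      using x by (simp add: insert_absorb)
    finally have "?C ` verts G = ?C ` ?V" .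
    moreover have "card (?C ` ?V) < card (?Cs ` ?V)"
    proof (rule card_image_less_if_factors[where x = x and y = y])
      show "\<forall>u\<in>?V. \<forall>v\<in>?V. ?Cs u = ?Cs v \<longrightarrow> ?C u = ?C v"
      proof (intro ballI impI)
        fix u v assume u: "u \<in> ?V" and "?Cs u = ?Cs v"
        then have "reach u v"
          using component_of_delete_vertex_eq_iff[OF u] reach_avoiding_imp_reach by simp
        then show "?C u = ?C v" using u component_of_eq_iff[of u v] by simp
      qed
      show "?C x = ?C y" using sep x component_of_eq_iff[of x y] by simp
      show "?Cs x \<noteq> ?Cs y" using sep component_of_delete_vertex_eq_iff[OF x] by simp
    qed (use finite_verts x y in auto)
    ultimately show "sdeg G s \<ge> 2"
      using num_C num_Cs by (simp add: sdeg_def)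
  }
qed

lemma cut_vertex_separated_neighbours:
  assumes "sdeg G s \<ge> 2"
  obtains z z' where "adj G s z" "adj G s z'" "\<not> reach_avoiding s z z'"
proof -
  obtain x y where xy: "x \<in> verts G - {s}" "y \<in> verts G - {s}" "reach x y" "\<not> reach_avoiding s x y"
    using assms sdeg_ge_2_iff_separates by blast
  obtain z where z: "adj G s z" "reach_avoiding s z y"
    using reach_delete_vertex_cases[OF xy(3), of s] xy by auto
  obtain z' where z': "adj G s z'" "reach_avoiding s z' x"
    using reach_delete_vertex_cases[OF reach_sym[OF xy(3)], of s] xy reach_avoiding_sym by blast
  have "\<not> reach_avoiding s z z'"
  proof
    assume "reach_avoiding s z z'"
    then have "reach_avoiding s x y"
      using z(2) z'(2) reach_avoiding_sym rtranclp_trans[of _ x z' z] rtranclp_trans[of _ x z y] by blast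
    then show False using xy(4) by simp
  qed
  then show ?thesis using z z' that by blast
qed

lemma cut_vertex_induced_P3:
  assumes "sdeg G s \<ge> 2"
  obtains a b where "adj G a s" "adj G s b" "\<not> adj G a b" "a \<noteq> b"
proof -
  obtain a b where ab: "adj G s a" "adj G s b" "\<not> reach_avoiding s a b"
    using cut_vertex_separated_neighbours[OF assms] .
  have "a \<noteq> s" "b \<noteq> s" using ab adj_imp_verts by auto
  then have "\<not> adj G a b"
    using ab(3) by (metis adj_delete_vertex r_into_rtranclp)
  moreover have "a \<noteq> b" using ab(3) by auto
  ultimately show ?thesis using that ab adj_commute by metis
qed

lemma cut_vertex_separates_neighbour:
  assumes "sdeg G s \<ge> 2"
  obtains b where "adj G s b" "\<not> reach_avoiding s r b"
proof -
  obtain z z' where z: "adj G s z" "adj G s z'" "\<not> reach_avoiding s z z'"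
    using cut_vertex_separated_neighbours[OF assms] .
  then have "\<not> (reach_avoiding s r z \<and> reach_avoiding s r z')"
    using reach_avoiding_sym rtranclp_trans[of _ z r z'] by blast
  then show ?thesis using z that by blast
qed

lemma cut_vertex_if_unique_neighbour:
  assumes "x \<in> verts G" "y \<in> verts G" "x \<noteq> v" "y \<noteq> v" "x \<noteq> y" "reach x y"
    and "\<And>w. adj G x w \<Longrightarrow> w = v"
  shows "sdeg G v \<ge> 2"
proof -
  have "\<not> adj (delete_vertex G v) x w" for w
    using assms(7) by (auto simp: adj_delete_vertex)
  then have "\<not> reach_avoiding v x y"
    using assms(5) by (metis converse_rtranclpE)
  then show ?thesis
    using assms(1-4,6) sdeg_ge_2_iff_separates by blast
qed

end

section \<open>The obstructions\<close>

lemma induced_subI: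
  assumes \<phi>: "bij_betw \<phi> I (verts H)" and \<psi>: "inj_on \<psi> I" "\<psi> ` I \<subseteq> verts G"
    and adj: "\<And>x y. x \<in> I \<Longrightarrow> y \<in> I \<Longrightarrow> adj H (\<phi> x) (\<phi> y) \<longleftrightarrow> adj G (\<psi> x) (\<psi> y)"
  shows "H \<prec> G"
proof -
  let ?\<phi>' = "inv_into I \<phi>"
  have \<phi>': "bij_betw ?\<phi>' (verts H) I"
    by (rule bij_betw_inv_into[OF \<phi>])
  have \<phi>\<phi>': "\<phi> (?\<phi>' u) = u" if "u \<in> verts H" for u
    using \<phi> that by (simp add: bij_betw_inv_into_right)
  show ?thesis unfolding induced_sub_def
  proof (intro exI[of _ "\<psi> \<circ> ?\<phi>'"] conjI ballI)
    show "inj_on (\<psi> \<circ> ?\<phi>') (verts H)"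
      using \<phi>' \<psi>(1) by (simp add: bij_betw_def comp_inj_on)
    show "(\<psi> \<circ> ?\<phi>') ` verts H \<subseteq> verts G"
      using \<phi>' \<psi>(2) by (auto simp: bij_betw_def)
    fix u v assume "u \<in> verts H" "v \<in> verts H"
    then show "{u, v} \<in> edges H \<longleftrightarrow> {(\<psi> \<circ> ?\<phi>') u, (\<psi> \<circ> ?\<phi>') v} \<in> edges G"
      using adj[of "?\<phi>' u" "?\<phi>' v"] \<phi>\<phi>' \<phi>' by (auto simp: adj_def bij_betw_def)
  qed
qed

lemma induced_sub_trans: "H1 \<prec> H2 \<Longrightarrow> H2 \<prec> G \<Longrightarrow> H1 \<prec> G"
  unfolding induced_sub_def
proof (elim exE conjE)
  fix f g
  assume f: "inj_on f (verts H1)" "f ` verts H1 \<subseteq> verts H2"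
    "\<forall>u\<in>verts H1. \<forall>v\<in>verts H1. {u, v} \<in> edges H1 \<longleftrightarrow> {f u, f v} \<in> edges H2"
    and g: "inj_on g (verts H2)" "g ` verts H2 \<subseteq> verts G"
    "\<forall>u\<in>verts H2. \<forall>v\<in>verts H2. {u, v} \<in> edges H2 \<longleftrightarrow> {g u, g v} \<in> edges G"
  show "\<exists>h. inj_on h (verts H1) \<and> h ` verts H1 \<subseteq> verts G \<and>
      (\<forall>u\<in>verts H1. \<forall>v\<in>verts H1. {u, v} \<in> edges H1 \<longleftrightarrow> {h u, h v} \<in> edges G)"
  proof (intro exI[of _ "g \<circ> f"] conjI ballI)
    show "inj_on (g \<circ> f) (verts H1)" by (rule comp_inj_on[OF f(1) inj_on_subset[OF g(1) f(2)]])
    show "(g \<circ> f) ` verts H1 \<subseteq> verts G" using f(2) g(2) by auto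
    fix u v assume "u \<in> verts H1" "v \<in> verts H1"
    moreover have "f u \<in> verts H2" "f v \<in> verts H2"
      using calculation f(2) by auto
    ultimately show "{u, v} \<in> edges H1 \<longleftrightarrow> {(g \<circ> f) u, (g \<circ> f) v} \<in> edges G"
      using f(3) g(3) by simp
  qed
qed

lemma three_mult_add_eq_iff:
  fixes i j k l :: nat
  shows "k < 3 \<Longrightarrow> l < 3 \<Longrightarrow> 3 * i + k = 3 * j + l \<longleftrightarrow> i = j \<and> k = l"
  by presburger

lemma nP3_index: "bij_betw (\<lambda>(i, k). 3 * i + k) ({..<n} \<times> {..<3}) (verts (nP3 n))"
proof (rule bij_betwI')
  show "(\<lambda>(i, k). 3 * i + k) x = (\<lambda>(i, k). 3 * i + k) y \<longleftrightarrow> x = y"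
    if "x \<in> {..<n} \<times> {..<3}" "y \<in> {..<n} \<times> {..<3}" for x y
    using that by (cases x; cases y) (auto simp: three_mult_add_eq_iff)
  show "(\<lambda>(i, k). 3 * i + k) x \<in> verts (nP3 n)" if "x \<in> {..<n} \<times> {..<3}" for x
    using that by (auto simp: nP3_def verts_def)
  show "\<exists>x\<in>{..<n} \<times> {..<3}. v = (\<lambda>(i, k). 3 * i + k) x" if "v \<in> verts (nP3 n)" for v
    using that by (intro bexI[of _ "(v div 3, v mod 3)"]) (auto simp: nP3_def verts_def)
qed

lemma edges_nP3_iff:
  "{u, v} \<in> edges (nP3 n) \<longleftrightarrow>
    (\<exists>m<n. (u = 3*m \<and> v = Suc (3*m)) \<or> (u = Suc (3*m) \<and> v = 3*m) \<or>
       (u = Suc (3*m) \<and> v = Suc (Suc (3*m))) \<or> (u = Suc (Suc (3*m)) \<and> v = Suc (3*m)))"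
  unfolding nP3_def edges_def by (auto simp: doubleton_eq_iff)

lemma adj_nP3:
  assumes "i < n" "j < n" "k < 3" "l < 3"
  shows "adj (nP3 n) (3 * i + k) (3 * j + l) \<longleftrightarrow> i = j \<and> (k + 1 = l \<or> l + 1 = k)"
proof -
  have digit: "3 * i' + k' = 3 * m \<longleftrightarrow> i' = m \<and> k' = 0"
    "3 * i' + k' = Suc (3 * m) \<longleftrightarrow> i' = m \<and> k' = 1"
    "3 * i' + k' = Suc (Suc (3 * m)) \<longleftrightarrow> i' = m \<and> k' = 2"
    if "k' < 3" for i' k' m :: nat
    using that by presburger+
  show ?thesis
    unfolding adj_def edges_nP3_iff digit[OF assms(3)] digit[OF assms(4)]
    using assms by auto
qed
lemma Kn_star_index:
  "bij_betw (\<lambda>(i, b). if b then i else n + i) ({..<n} \<times> UNIV) (verts (Kn_star n))"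
proof (rule bij_betwI')
  show "(\<lambda>(i, b). if b then i else n + i) x = (\<lambda>(i, b). if b then i else n + i) y \<longleftrightarrow> x = y"
    if "x \<in> {..<n} \<times> UNIV" "y \<in> {..<n} \<times> UNIV" for x y
    using that by (auto split: if_splits)
  show "(\<lambda>(i, b). if b then i else n + i) x \<in> verts (Kn_star n)" if "x \<in> {..<n} \<times> UNIV" for x
    using that by (auto simp: Kn_star_def verts_def)
  show "\<exists>x\<in>{..<n} \<times> UNIV. v = (\<lambda>(i, b). if b then i else n + i) x" if "v \<in> verts (Kn_star n)" for v
  proof (cases "v < n")
    case True
    then show ?thesis by (intro bexI[of _ "(v, True)"]) auto
  next
    case False
    then show ?thesis
      using that by (intro bexI[of _ "(v - n, False)"]) (auto simp: Kn_star_def verts_def)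
  qed
qed

lemma adj_Kn_star:
  assumes "i < n" "j < n"
  shows "adj (Kn_star n) (if b then i else n + i) (if c then j else n + j) \<longleftrightarrow>
    (b \<and> c \<and> i \<noteq> j) \<or> (b \<noteq> c \<and> i = j)"
  using assms unfolding adj_def Kn_star_def edges_def
  by (cases b; cases c) (auto simp: doubleton_eq_iff)

lemma K1n_star_index:
  "bij_betw (case_option 0 (\<lambda>(i, b). Suc (if b then i else n + i)))
     (insert None (Some ` ({..<n} \<times> UNIV))) (verts (K1n_star n))"
proof (rule bij_betwI')
  show "case_option 0 (\<lambda>(i, b). Suc (if b then i else n + i)) x =
      case_option 0 (\<lambda>(i, b). Suc (if b then i else n + i)) y \<longleftrightarrow> x = y"
    if "x \<in> insert None (Some ` ({..<n} \<times> UNIV))" "y \<in> insert None (Some ` ({..<n} \<times> UNIV))" for x y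
    using that by (auto split: if_splits)
  show "case_option 0 (\<lambda>(i, b). Suc (if b then i else n + i)) x \<in> verts (K1n_star n)"
    if "x \<in> insert None (Some ` ({..<n} \<times> UNIV))" for x
    using that by (auto simp: K1n_star_def verts_def)
  show "\<exists>x\<in>insert None (Some ` ({..<n} \<times> UNIV)). v = case_option 0 (\<lambda>(i, b). Suc (if b then i else n + i)) x"
    if "v \<in> verts (K1n_star n)" for v
  proof -
    consider "v = 0" | "0 < v" "v \<le> n" | "n < v" by linarith
    then show ?thesis
    proof cases
      case 1
      then show ?thesis by (intro bexI[of _ None]) auto
    next
      case 2
      then show ?thesis by (intro bexI[of _ "Some (v - 1, True)"]) auto
    next
      case 3
      then show ?thesis
        using that by (intro bexI[of _ "Some (v - n - 1, False)"]) (auto simp: K1n_star_def verts_def)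
    qed
  qed
qed

lemma adj_K1n_star:
  assumes "i < n" "j < n"
  shows "adj (K1n_star n) 0 (Suc (if b then i else n + i)) \<longleftrightarrow> b"
    and "adj (K1n_star n) (Suc (if b then i else n + i)) (Suc (if c then j else n + j)) \<longleftrightarrow>
      b \<noteq> c \<and> i = j"
  using assms unfolding adj_def K1n_star_def edges_def
  by (auto simp: doubleton_eq_iff)

lemma wf_graph_Kn_star: "wf_graph (Kn_star n)"
  unfolding wf_graph_def
proof (intro conjI ballI)
  show "finite (verts (Kn_star n))" by (simp add: Kn_star_def verts_def)
  fix e assume "e \<in> edges (Kn_star n)"
  then have "(\<exists>i j. e = {i,j} \<and> i<n \<and> j<n \<and> i\<noteq>j) \<or> (\<exists>i. e = {i, n+i} \<and> i<n)"
    by (simp add: Kn_star_def edges_def)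
  then show "\<exists>u v. u \<noteq> v \<and> e = {u,v} \<and> u \<in> verts (Kn_star n) \<and> v \<in> verts (Kn_star n)"
  proof (elim disjE exE conjE)
    fix i j assume "e = {i,j}" "i<n" "j<n" "i\<noteq>j"
    then show ?thesis by (intro exI[of _ i] exI[of _ j]) (simp add: Kn_star_def verts_def)
  next
    fix i assume "e = {i,n+i}" "i<n"
    then show ?thesis by (intro exI[of _ i] exI[of _ "n+i"]) (simp add: Kn_star_def verts_def)
  qed
qed

lemma wf_graph_nP3: "wf_graph (nP3 n)"
  unfolding wf_graph_def
proof (intro conjI ballI)
  show "finite (verts (nP3 n))" by (simp add: nP3_def verts_def)
  fix e assume "e \<in> edges (nP3 n)"
  then have "(\<exists>i. e = {3*i, 3*i+1} \<and> i<n) \<or> (\<exists>i. e = {3*i+1, 3*i+2} \<and> i<n)"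
    by (simp add: nP3_def edges_def)
  then show "\<exists>u v. u \<noteq> v \<and> e = {u,v} \<and> u \<in> verts (nP3 n) \<and> v \<in> verts (nP3 n)"
  proof (elim disjE exE conjE)
    fix i assume "e = {3*i, 3*i+1}" "i<n"
    then show ?thesis by (intro exI[of _ "3*i"] exI[of _ "3*i+1"]) (simp add: nP3_def verts_def)
  next
    fix i assume "e = {3*i+1, 3*i+2}" "i<n"
    then show ?thesis by (intro exI[of _ "3*i+1"] exI[of _ "3*i+2"]) (simp add: nP3_def verts_def)
  qed
qed

lemma wf_graph_K1n_star: "wf_graph (K1n_star n)"
  unfolding wf_graph_def
proof (intro conjI ballI)
  show "finite (verts (K1n_star n))" by (simp add: K1n_star_def verts_def)
  fix e assume "e \<in> edges (K1n_star n)"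
  then have "(\<exists>i. e = {0, i} \<and> 1 \<le> i \<and> i \<le> n) \<or> (\<exists>i. e = {i, n+i} \<and> 1 \<le> i \<and> i \<le> n)"
    by (simp add: K1n_star_def edges_def)
  then show "\<exists>u v. u \<noteq> v \<and> e = {u,v} \<and> u \<in> verts (K1n_star n) \<and> v \<in> verts (K1n_star n)"
  proof (elim disjE exE conjE)
    fix i assume "e = {0, i}" "1 \<le> i" "i \<le> n"
    then show ?thesis by (intro exI[of _ 0] exI[of _ i]) (simp add: K1n_star_def verts_def)
  next
    fix i assume "e = {i, n+i}" "1 \<le> i" "i \<le> n"
    then show ?thesis by (intro exI[of _ i] exI[of _ "n+i"]) (simp add: K1n_star_def verts_def)
  qed
qed

lemma card_cut_vertices_ge:
  assumes "wf_graph H" and "finite A"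
    and "\<And>v. v \<in> A \<Longrightarrow> \<exists>x y. x \<in> verts H \<and> y \<in> verts H \<and> x \<noteq> v \<and> y \<noteq> v \<and> x \<noteq> y \<and>
      (adj H)\<^sup>*\<^sup>* x y \<and> (\<forall>w. adj H x w \<longrightarrow> w = v)"
  shows "card A \<le> card (cut_vertices H)"
proof (rule card_mono)
  interpret simple_graph H by (rule simple_graph.intro[OF assms(1)])
  show "finite (cut_vertices H)"
    using finite_verts by (simp add: cut_vertices_def)
  show "A \<subseteq> cut_vertices H"
  proof
    fix v assume "v \<in> A"
    then obtain x y where xy: "x \<in> verts H" "y \<in> verts H" "x \<noteq> v" "y \<noteq> v" "x \<noteq> y"
      "reach x y" "\<forall>w. adj H x w \<longrightarrow> w = v"
      using assms(3) by blast
    then have "adj H x v"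
      using converse_rtranclpE[OF xy(6)] by metis
    then have "v \<in> verts H" using adj_imp_verts by blast
    moreover have "sdeg H v \<ge> 2"
      using xy by (intro cut_vertex_if_unique_neighbour) auto
    ultimately show "v \<in> cut_vertices H" by (simp add: cut_vertices_def)
  qed
qed

lemma card_cut_vertices_Kn_star:
  assumes "2 \<le> n"
  shows "n \<le> card (cut_vertices (Kn_star n))"
proof -
  have "card {..<n} \<le> card (cut_vertices (Kn_star n))"
  proof (rule card_cut_vertices_ge[OF wf_graph_Kn_star])
    fix i assume i: "i \<in> {..<n}"
    define j where "j = (if i = 0 then 1 else 0::nat)"
    have j: "j < n" "j \<noteq> i" using assms i j_def by auto
    have pendant: "adj (Kn_star n) (n + i) i"
      using adj_Kn_star[of i n i False True] i by simp
    moreover have "adj (Kn_star n) i j"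
      using adj_Kn_star[of i n j True True] i j by simp
    ultimately have "(adj (Kn_star n))\<^sup>*\<^sup>* (n + i) j" by simp
    moreover have "w = i" if "adj (Kn_star n) (n + i) w" for w
    proof -
      have "w \<in> verts (Kn_star n)"
        using that simple_graph.adj_imp_verts[OF simple_graph.intro[OF wf_graph_Kn_star]] by blast
      then have "w \<in> (\<lambda>(k, c). if c then k else n + k) ` ({..<n} \<times> UNIV)"
        using bij_betw_imp_surj_on[OF Kn_star_index] by simp
      then obtain k c where "k < n" "w = (if c then k else n + k)" by auto
      then show "w = i" using that adj_Kn_star[of i n k False c] i by auto
    qed
    ultimately show "\<exists>x y. x \<in> verts (Kn_star n) \<and> y \<in> verts (Kn_star n) \<and> x \<noteq> i \<and> y \<noteq> i \<and>
        x \<noteq> y \<and> (adj (Kn_star n))\<^sup>*\<^sup>* x y \<and> (\<forall>w. adj (Kn_star n) x w \<longrightarrow> w = i)"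
      using i j by (intro exI[of _ "n + i"] exI[of _ j]) (auto simp: Kn_star_def verts_def)
  qed simp
  then show ?thesis by simp
qed

lemma card_cut_vertices_nP3: "n \<le> card (cut_vertices (nP3 n))"
proof -
  have "card ((\<lambda>i. 3 * i + 1) ` {..<n}) \<le> card (cut_vertices (nP3 n))"
  proof (rule card_cut_vertices_ge[OF wf_graph_nP3])
    fix v assume "v \<in> (\<lambda>i. 3 * i + 1) ` {..<n}"
    then obtain i where i: "i < n" "v = 3 * i + 1" by blast
    have "adj (nP3 n) (3 * i) (3 * i + 1)"
      using adj_nP3[of i n i 0 1] i by simp
    moreover have "adj (nP3 n) (3 * i + 1) (3 * i + 2)"
      using adj_nP3[of i n i 1 2] i by simp
    ultimately have "(adj (nP3 n))\<^sup>*\<^sup>* (3 * i) (3 * i + 2)" by simp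
    moreover have "w = 3 * i + 1" if "adj (nP3 n) (3 * i) w" for w
    proof -
      have "w \<in> verts (nP3 n)"
        using that simple_graph.adj_imp_verts[OF simple_graph.intro[OF wf_graph_nP3]] by blast
      then have "w \<in> (\<lambda>(j, l). 3 * j + l) ` ({..<n} \<times> {..<3})"
        using bij_betw_imp_surj_on[OF nP3_index] by simp
      then obtain j l where "j < n" "l < 3" "w = 3 * j + l" by auto
      then show ?thesis using that adj_nP3[of i n j 0 l] i by auto
    qed
    ultimately show "\<exists>x y. x \<in> verts (nP3 n) \<and> y \<in> verts (nP3 n) \<and> x \<noteq> v \<and> y \<noteq> v \<and>
        x \<noteq> y \<and> (adj (nP3 n))\<^sup>*\<^sup>* x y \<and> (\<forall>w. adj (nP3 n) x w \<longrightarrow> w = v)"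
      using i by (intro exI[of _ "3 * i"] exI[of _ "3 * i + 2"]) (auto simp: nP3_def verts_def)
  qed simp
  moreover have "card ((\<lambda>i. 3 * i + 1) ` {..<n}) = n"
    by (simp add: card_image inj_on_def)
  ultimately show ?thesis by simp
qed

lemma card_cut_vertices_K1n_star: "n \<le> card (cut_vertices (K1n_star n))"
proof -
  have "card (Suc ` {..<n}) \<le> card (cut_vertices (K1n_star n))"
  proof (rule card_cut_vertices_ge[OF wf_graph_K1n_star])
    fix v assume "v \<in> Suc ` {..<n}"
    then obtain i where i: "i < n" "v = Suc i" by blast
    have "adj (K1n_star n) (Suc (n + i)) (Suc i)"
      using adj_K1n_star(2)[of i n i, where b = False and c = True] i by simp
    moreover have "adj (K1n_star n) (Suc i) 0"
      using adj_K1n_star(1)[of i n i, where b = True] i by (simp add: adj_commute)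
    ultimately have "(adj (K1n_star n))\<^sup>*\<^sup>* (Suc (n + i)) 0" by simp
    moreover have "w = Suc i" if "adj (K1n_star n) (Suc (n + i)) w" for w
    proof -
      have "w \<in> verts (K1n_star n)"
        using that simple_graph.adj_imp_verts[OF simple_graph.intro[OF wf_graph_K1n_star]] by blast
      then have "w \<in> case_option 0 (\<lambda>(j, c). Suc (if c then j else n + j)) `
          insert None (Some ` ({..<n} \<times> UNIV))"
        using bij_betw_imp_surj_on[OF K1n_star_index] by simp
      then consider "w = 0" | j c where "j < n" "w = Suc (if c then j else n + j)" by auto
      then show ?thesis
        using that adj_K1n_star[of i n i False] adj_K1n_star[of i n _ False] i
        by cases (auto simp: adj_commute)
    qed
    ultimately show "\<exists>x y. x \<in> verts (K1n_star n) \<and> y \<in> verts (K1n_star n) \<and> x \<noteq> v \<and> y \<noteq> v \<and>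
        x \<noteq> y \<and> (adj (K1n_star n))\<^sup>*\<^sup>* x y \<and> (\<forall>w. adj (K1n_star n) x w \<longrightarrow> w = v)"
      using i by (intro exI[of _ "Suc (n + i)"] exI[of _ 0]) (auto simp: K1n_star_def verts_def)
  qed simp
  then show ?thesis by (simp add: card_image)
qed

definition obstructions :: "nat \<Rightarrow> nat graph set" where
  "obstructions n = {Kn_star n, nP3 n, K1n_star n}"

lemma obstruction_has_many_cut_vertices:
  assumes "H \<in> obstructions n" "2 \<le> n"
  shows "wf_graph H" "n \<le> card (cut_vertices H)"
  using assms wf_graph_Kn_star wf_graph_nP3 wf_graph_K1n_star
    card_cut_vertices_Kn_star card_cut_vertices_nP3 card_cut_vertices_K1n_star
  by (auto simp: obstructions_def)

section \<open>Embedding the obstructions\<close>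

context simple_graph
begin

lemma induced_P3_nth:
  assumes "adj G a b" "adj G b c" "\<not> adj G a c" "a \<noteq> c" "k < 3" "l < 3"
  shows "([a, b, c] ! k = [a, b, c] ! l \<longleftrightarrow> k = l) \<and>
    (adj G ([a, b, c] ! k) ([a, b, c] ! l) \<longleftrightarrow> k + 1 = l \<or> l + 1 = k)"
proof -
  have "adj G b a" "adj G c b" "\<not> adj G c a"
    using assms(1-3) by (simp_all add: adj_commute)
  moreover have "a \<noteq> b" "b \<noteq> c"
    using assms(1,2) not_adj_self by auto
  moreover have "k \<in> {0, 1, 2}" "l \<in> {0, 1, 2}"
    using assms(5,6) by auto
  ultimately show ?thesis
    using assms(1-4) not_adj_self[of a] not_adj_self[of b] not_adj_self[of c] by auto
qed

lemma nP3_induced_subI: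
  fixes a b c :: "nat \<Rightarrow> 'a"
  assumes path: "\<And>i. i < n \<Longrightarrow> adj G (a i) (b i) \<and> adj G (b i) (c i) \<and> \<not> adj G (a i) (c i) \<and> a i \<noteq> c i"
    and apart: "\<And>i j x y. i < n \<Longrightarrow> j < n \<Longrightarrow> i \<noteq> j \<Longrightarrow> x \<in> {a i, b i, c i} \<Longrightarrow>
      y \<in> {a j, b j, c j} \<Longrightarrow> x \<noteq> y \<and> \<not> adj G x y"
  shows "nP3 n \<prec> G"
proof -
  define \<psi> where "\<psi> = (\<lambda>(i, k). [a i, b i, c i] ! k)"
  have digits: "k \<in> {0, 1, 2}" if "k < (3::nat)" for k
    using that by auto
  have \<psi>_mem: "\<psi> (i, k) \<in> {a i, b i, c i}" if "k < 3" for i k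
    using digits[OF that] by (auto simp: \<psi>_def)
  have on_path: "(\<psi> (i, k) = \<psi> (i, l) \<longleftrightarrow> k = l) \<and>
      (adj G (\<psi> (i, k)) (\<psi> (i, l)) \<longleftrightarrow> k + 1 = l \<or> l + 1 = k)"
    if "i < n" "k < 3" "l < 3" for i k l
  proof -
    have "adj G (a i) (b i)" "adj G (b i) (c i)" "\<not> adj G (a i) (c i)" "a i \<noteq> c i"
      using path[OF that(1)] by auto
    from induced_P3_nth[OF this that(2,3)] show ?thesis
      by (simp only: \<psi>_def prod.case)
  qed
  have apart_\<psi>: "\<psi> (i, k) \<noteq> \<psi> (j, l) \<and> \<not> adj G (\<psi> (i, k)) (\<psi> (j, l))"
    if "i < n" "j < n" "i \<noteq> j" "k < 3" "l < 3" for i j k l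
    using apart[OF that(1-3) \<psi>_mem[OF that(4)] \<psi>_mem[OF that(5)]] .
  show ?thesis
  proof (rule induced_subI[OF nP3_index, where \<psi> = \<psi>])
    show "inj_on \<psi> ({..<n} \<times> {..<3})"
    proof (rule inj_onI, clarify)
      fix i k j l
      assume "\<psi> (i, k) = \<psi> (j, l)" "i < n" "k < 3" "j < n" "l < 3"
      then show "i = j \<and> k = l"
        using on_path[of i k l] apart_\<psi>[of i j k l] by (cases "i = j") simp_all
    qed
    show "\<psi> ` ({..<n} \<times> {..<3}) \<subseteq> verts G"
    proof clarify
      fix i k assume "i < n" "k < (3::nat)"
      then have "adj G (\<psi> (i, k)) (\<psi> (i, if k = 1 then 0 else 1))"
        using on_path[of i k "if k = 1 then 0 else 1"] by auto
      then show "\<psi> (i, k) \<in> verts G" using adj_imp_verts by blast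
    qed
    fix x y :: "nat \<times> nat"
    assume "x \<in> {..<n} \<times> {..<3}" "y \<in> {..<n} \<times> {..<3}"
    moreover obtain i k j l where "x = (i, k)" "y = (j, l)" by fastforce
    ultimately show "adj (nP3 n) ((\<lambda>(i, k). 3 * i + k) x) ((\<lambda>(i, k). 3 * i + k) y) \<longleftrightarrow>
        adj G (\<psi> x) (\<psi> y)"
      using on_path[of i k l] apart_\<psi>[of i j k l] adj_nP3[of i n j k l] by (cases "i = j") auto
  qed
qed

lemma Kn_star_induced_subI:
  fixes a p :: "nat \<Rightarrow> 'a"
  assumes clique: "\<And>i j. i < n \<Longrightarrow> j < n \<Longrightarrow> i \<noteq> j \<Longrightarrow> a i \<noteq> a j \<and> adj G (a i) (a j)"
    and pendant: "\<And>i j. i < n \<Longrightarrow> j < n \<Longrightarrow> adj G (p i) (a j) \<longleftrightarrow> i = j"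
    and pendants_apart: "\<And>i j. i < n \<Longrightarrow> j < n \<Longrightarrow> i \<noteq> j \<Longrightarrow> p i \<noteq> p j \<and> \<not> adj G (p i) (p j)"
    and pendant_not_leaf: "\<And>i j. i < n \<Longrightarrow> j < n \<Longrightarrow> p i \<noteq> a j"
  shows "Kn_star n \<prec> G"
proof -
  define \<psi> where "\<psi> = (\<lambda>(i, b). if b then a i else p i)"
  have \<psi>: "(\<psi> (i, b) = \<psi> (j, c) \<longleftrightarrow> i = j \<and> b = c) \<and>
      (adj G (\<psi> (i, b)) (\<psi> (j, c)) \<longleftrightarrow> (b \<and> c \<and> i \<noteq> j) \<or> (b \<noteq> c \<and> i = j))"
    if "i < n" "j < n" for i j b c
  proof (cases "i = j")
    case True
    then show ?thesis
      using pendant[OF that(1) that(1)] pendant_not_leaf[OF that(1) that(1)] not_adj_self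
      by (cases b; cases c) (auto simp: \<psi>_def adj_commute)
  next
    case False
    then show ?thesis
      using clique[OF that False] pendants_apart[OF that False] pendant[OF that] pendant[OF that(2,1)]
        pendant_not_leaf[OF that] pendant_not_leaf[OF that(2,1)]
      by (cases b; cases c) (auto simp: \<psi>_def adj_commute)
  qed
  show ?thesis
  proof (rule induced_subI[OF Kn_star_index, where \<psi> = \<psi>])
    show "inj_on \<psi> ({..<n} \<times> UNIV)"
      using \<psi> by (auto simp: inj_on_def)
    show "\<psi> ` ({..<n} \<times> UNIV) \<subseteq> verts G"
    proof clarify
      fix i b assume "i < n"
      then have "adj G (\<psi> (i, b)) (\<psi> (i, \<not> b))" using \<psi> by simp
      then show "\<psi> (i, b) \<in> verts G" using adj_imp_verts by blast
    qed
    fix x y :: "nat \<times> bool"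
    assume "x \<in> {..<n} \<times> UNIV" "y \<in> {..<n} \<times> UNIV"
    then show "adj (Kn_star n) ((\<lambda>(i, b). if b then i else n + i) x) ((\<lambda>(i, b). if b then i else n + i) y)
        \<longleftrightarrow> adj G (\<psi> x) (\<psi> y)"
      using \<psi> adj_Kn_star by (cases x; cases y) simp
  qed
qed

lemma K1n_star_induced_subI:
  fixes z :: 'a and a p :: "nat \<Rightarrow> 'a"
  assumes "z \<in> verts G"
    and centre: "\<And>i. i < n \<Longrightarrow> adj G z (a i) \<and> \<not> adj G z (p i) \<and> z \<noteq> p i"
    and leaves_apart: "\<And>i j. i < n \<Longrightarrow> j < n \<Longrightarrow> i \<noteq> j \<Longrightarrow> a i \<noteq> a j \<and> \<not> adj G (a i) (a j)"
    and pendant: "\<And>i j. i < n \<Longrightarrow> j < n \<Longrightarrow> adj G (p i) (a j) \<longleftrightarrow> i = j"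
    and pendants_apart: "\<And>i j. i < n \<Longrightarrow> j < n \<Longrightarrow> i \<noteq> j \<Longrightarrow> p i \<noteq> p j \<and> \<not> adj G (p i) (p j)"
    and pendant_not_leaf: "\<And>i j. i < n \<Longrightarrow> j < n \<Longrightarrow> p i \<noteq> a j"
  shows "K1n_star n \<prec> G"
proof -
  define \<psi>' where "\<psi>' = (\<lambda>(i, b). if b then a i else p i)"
  define \<psi> where "\<psi> = case_option z \<psi>'"
  have \<psi>': "(\<psi>' (i, b) = \<psi>' (j, c) \<longleftrightarrow> i = j \<and> b = c) \<and>
      (adj G (\<psi>' (i, b)) (\<psi>' (j, c)) \<longleftrightarrow> b \<noteq> c \<and> i = j)"
    if "i < n" "j < n" for i j b c
  proof (cases "i = j")
    case True
    then show ?thesis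
      using pendant[OF that(1) that(1)] pendant_not_leaf[OF that(1) that(1)] not_adj_self
      by (cases b; cases c) (auto simp: \<psi>'_def adj_commute)
  next
    case False
    then show ?thesis
      using leaves_apart[OF that False] pendants_apart[OF that False] pendant[OF that] pendant[OF that(2,1)]
        pendant_not_leaf[OF that] pendant_not_leaf[OF that(2,1)]
      by (cases b; cases c) (auto simp: \<psi>'_def adj_commute)
  qed
  have z: "z \<noteq> \<psi>' (i, b) \<and> (adj G z (\<psi>' (i, b)) \<longleftrightarrow> b)" if "i < n" for i b
    using centre[OF that] not_adj_self by (cases b) (auto simp: \<psi>'_def)
  show ?thesis
  proof (rule induced_subI[OF K1n_star_index, where \<psi> = \<psi>])
    show "inj_on \<psi> (insert None (Some ` ({..<n} \<times> UNIV)))"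
      using \<psi>' z by (fastforce simp: inj_on_def \<psi>_def)
    have "\<psi>' (i, b) \<in> verts G" if "i < n" for i b
      using \<psi>'[OF that that, of b "\<not> b"] adj_imp_verts by blast
    then show "\<psi> ` insert None (Some ` ({..<n} \<times> UNIV)) \<subseteq> verts G"
      using \<open>z \<in> verts G\<close> by (auto simp: \<psi>_def)
    fix x y :: "(nat \<times> bool) option"
    assume "x \<in> insert None (Some ` ({..<n} \<times> UNIV))" "y \<in> insert None (Some ` ({..<n} \<times> UNIV))"
    then show "adj (K1n_star n) (case_option 0 (\<lambda>(i, b). Suc (if b then i else n + i)) x)
        (case_option 0 (\<lambda>(i, b). Suc (if b then i else n + i)) y) \<longleftrightarrow> adj G (\<psi> x) (\<psi> y)"
    proof -
      have "\<not> adj (K1n_star n) 0 0" "\<not> adj G z z"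
        using simple_graph.not_adj_self[OF simple_graph.intro[OF wf_graph_K1n_star]] not_adj_self
        by auto
      moreover have "adj (K1n_star n) 0 (Suc (if c then j else n + j)) \<longleftrightarrow> adj G z (\<psi>' (j, c))"
        "adj (K1n_star n) (Suc (if c then j else n + j)) 0 \<longleftrightarrow> adj G (\<psi>' (j, c)) z"
        if "j < n" for j c
        using adj_K1n_star(1)[OF that that] z[OF that] by (simp_all add: adj_commute)
      moreover have "adj (K1n_star n) (Suc (if b then i else n + i)) (Suc (if c then j else n + j)) \<longleftrightarrow>
          adj G (\<psi>' (i, b)) (\<psi>' (j, c))" if "i < n" "j < n" for i j b c
        using adj_K1n_star(2)[OF that] \<psi>'[OF that] by simp
      ultimately show ?thesis
        using \<open>x \<in> _\<close> \<open>y \<in> _\<close> by (auto simp: \<psi>_def)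
    qed
  qed
qed

section \<open>Levels below a root\<close>

definition dist :: "'a \<Rightarrow> 'a \<Rightarrow> nat" where
  "dist r w = (LEAST k. (adj G ^^ k) r w)"

lemma dist_walk: "reach r w \<Longrightarrow> (adj G ^^ dist r w) r w"
  unfolding dist_def rtranclp_power by (erule exE) (rule LeastI)

lemma dist_le_walk: "(adj G ^^ k) r w \<Longrightarrow> dist r w \<le> k"
  unfolding dist_def by (rule Least_le)

lemma dist_adj_le: "reach r u \<Longrightarrow> adj G u w \<Longrightarrow> dist r w \<le> Suc (dist r u)"
  using dist_walk relpowp_Suc_I dist_le_walk by metis

lemma dist_adj_bounds:
  "reach r u \<Longrightarrow> adj G u w \<Longrightarrow> dist r w \<le> Suc (dist r u) \<and> dist r u \<le> Suc (dist r w)"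
  using dist_adj_le reach_step adj_commute by metis

lemma dist_parent:
  assumes "reach r w" "w \<noteq> r"
  obtains p where "adj G p w" "Suc (dist r p) = dist r w" "reach r p"
proof -
  obtain k where k: "dist r w = Suc k"
    using dist_walk[OF assms(1)] assms(2) by (cases "dist r w") auto
  then have "(adj G ^^ Suc k) r w" using dist_walk[OF assms(1)] by simp
  then obtain p where p: "(adj G ^^ k) r p" "adj G p w" by (rule relpowp_Suc_E)
  have "reach r p" using p(1) rtranclp_power by metis
  moreover have "dist r p \<le> k" using dist_le_walk[OF p(1)] .
  moreover have "dist r w \<le> Suc (dist r p)" using dist_adj_le[OF \<open>reach r p\<close> p(2)] .
  ultimately show ?thesis using that p(2) k by simp
qed

lemma walk_through_separator:
  "(adj G ^^ k) r w \<Longrightarrow> r \<noteq> s \<Longrightarrow> w \<noteq> s \<Longrightarrow> \<not> reach_avoiding s r w \<Longrightarrow> \<exists>j<k. (adj G ^^ j) r s"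
proof (induction k arbitrary: w)
  case 0
  then show ?case by (metis relpowp_0_E rtranclp.rtrancl_refl)
next
  case (Suc k)
  from Suc.prems(1) obtain u where u: "(adj G ^^ k) r u" "adj G u w" by (rule relpowp_Suc_E)
  show ?case
  proof (cases "u = s")
    case True
    then show ?thesis using u by auto
  next
    case False
    then have "\<not> reach_avoiding s r u"
      using Suc.prems(3,4) u(2) reach_avoiding_step by blast
    then obtain j where "j < k" "(adj G ^^ j) r s" using Suc.IH[OF u(1) Suc.prems(2) False] by blast
    then show ?thesis by (intro exI[of _ j]) auto
  qed
qed

lemma dist_less_if_separated:
  "reach r w \<Longrightarrow> r \<noteq> s \<Longrightarrow> w \<noteq> s \<Longrightarrow> \<not> reach_avoiding s r w \<Longrightarrow> dist r s < dist r w"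
  using walk_through_separator[OF dist_walk] dist_le_walk by (meson le_less_trans)

lemma not_reach_avoiding_step:
  "\<not> reach_avoiding s r w \<Longrightarrow> adj G w x \<Longrightarrow> x \<noteq> s \<Longrightarrow> w \<noteq> s \<Longrightarrow> \<not> reach_avoiding s r x"
  using reach_avoiding_step adj_commute by metis

end

locale rooted_graph = simple_graph +
  fixes r :: 'a
  assumes root: "r \<in> verts G"
begin

abbreviation level :: "'a \<Rightarrow> nat" where
  "level \<equiv> dist r"

definition cuts :: "'a set" where
  "cuts = {s. sdeg G s \<ge> 2 \<and> reach r s \<and> s \<noteq> r}"

definition parent :: "'a \<Rightarrow> 'a" where
  "parent s = (SOME p. adj G p s \<and> Suc (level p) = level s \<and> reach r p)"

definition beyond :: "'a \<Rightarrow> 'a" where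
  "beyond s = (SOME b. adj G s b \<and> \<not> reach_avoiding s r b)"

lemma cutsD: "s \<in> cuts \<Longrightarrow> sdeg G s \<ge> 2 \<and> reach r s \<and> s \<noteq> r"
  by (simp add: cuts_def)

lemma parent:
  assumes "s \<in> cuts"
  shows "adj G (parent s) s \<and> Suc (level (parent s)) = level s \<and> reach r (parent s)"
proof -
  have "\<exists>p. adj G p s \<and> Suc (level p) = level s \<and> reach r p"
    using dist_parent cutsD[OF assms] by metis
  then show ?thesis
    unfolding parent_def by (rule someI_ex)
qed

lemma beyond:
  assumes "s \<in> cuts"
  shows "adj G s (beyond s) \<and> \<not> reach_avoiding s r (beyond s)"
proof -
  have "\<exists>b. adj G s b \<and> \<not> reach_avoiding s r b"
    using cut_vertex_separates_neighbour cutsD[OF assms] by metis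
  then show ?thesis
    unfolding beyond_def by (rule someI_ex)
qed

lemma beyond_neq: "s \<in> cuts \<Longrightarrow> beyond s \<noteq> s"
  using beyond not_adj_self by metis

lemma reach_beyond: "s \<in> cuts \<Longrightarrow> reach r (beyond s)"
  using beyond cutsD reach_step by metis

lemma level_beyond: "s \<in> cuts \<Longrightarrow> level (beyond s) = Suc (level s)"
  using dist_adj_le[of r s "beyond s"] dist_less_if_separated[OF reach_beyond] beyond beyond_neq cutsD
  by (metis le_antisym Suc_leI)

lemma beyond_not_adj:
  assumes "s \<in> cuts" "reach r x" "level x \<le> level s" "x \<noteq> s"
  shows "\<not> adj G (beyond s) x"
proof
  assume "adj G (beyond s) x"
  then have "\<not> reach_avoiding s r x"
    using not_reach_avoiding_step beyond[OF assms(1)] beyond_neq[OF assms(1)] assms(4) by blast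
  then have "level s < level x"
    using dist_less_if_separated[OF assms(2)] cutsD[OF assms(1)] assms(4) by metis
  then show False using assms(3) by simp
qed

lemma beyond_on_level:
  assumes "s \<in> cuts" "t \<in> cuts" "level s = level t"
  shows "adj G (beyond s) t \<longleftrightarrow> s = t" and "beyond s \<noteq> t"
    and "s \<noteq> t \<Longrightarrow> beyond s \<noteq> beyond t \<and> \<not> adj G (beyond s) (beyond t)"
proof -
  show "adj G (beyond s) t \<longleftrightarrow> s = t"
    using beyond[OF assms(1)] beyond_not_adj[OF assms(1)] cutsD[OF assms(2)] assms(3)
    by (metis adj_commute order_refl)
  show "beyond s \<noteq> t"
    using level_beyond[OF assms(1)] assms(3) by (metis n_not_Suc_n)
  assume "s \<noteq> t"
  show "beyond s \<noteq> beyond t \<and> \<not> adj G (beyond s) (beyond t)"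
  proof
    show "beyond s \<noteq> beyond t"
      using beyond[OF assms(2)] beyond_not_adj[OF assms(1)] cutsD[OF assms(2)] assms(3) \<open>s \<noteq> t\<close>
      by (metis adj_commute order_refl)
    show "\<not> adj G (beyond s) (beyond t)"
    proof
      assume adj: "adj G (beyond s) (beyond t)"
      have "beyond t \<noteq> s" using level_beyond[OF assms(2)] assms(3) by auto
      have "reach_avoiding s r (beyond t)"
      proof (rule ccontr)
        assume "\<not> reach_avoiding s r (beyond t)"
        then have "\<not> reach_avoiding s r t"
          using not_reach_avoiding_step beyond[OF assms(2)] adj_commute \<open>s \<noteq> t\<close> \<open>beyond t \<noteq> s\<close>
          by metis
        then have "level s < level t"
          using dist_less_if_separated cutsD[OF assms(2)] cutsD[OF assms(1)] \<open>s \<noteq> t\<close> by metis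
        then show False using assms(3) by simp
      qed
      moreover have "\<not> reach_avoiding s r (beyond t)"
        using not_reach_avoiding_step[OF _ adj \<open>beyond t \<noteq> s\<close> beyond_neq[OF assms(1)]] beyond[OF assms(1)]
        by blast
      ultimately show False by simp
    qed
  qed
qed

lemma induced_P3_parent_beyond:
  assumes "s \<in> cuts"
  shows "adj G (parent s) s \<and> adj G s (beyond s) \<and> \<not> adj G (parent s) (beyond s) \<and> parent s \<noteq> beyond s"
proof -
  have "\<not> adj G (parent s) (beyond s)"
    using dist_adj_bounds[of r "parent s" "beyond s"] parent[OF assms] level_beyond[OF assms] by auto
  moreover have "parent s \<noteq> beyond s"
  proof
    assume "parent s = beyond s"
    then show False using parent[OF assms] level_beyond[OF assms] by simp
  qed
  ultimately show ?thesis using parent[OF assms] beyond[OF assms] by blast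
qed

lemma nP3_if_levels_spread:
  assumes Y: "Y \<subseteq> cuts" "finite Y" "card Y = n"
    and spread: "\<And>s t. s \<in> Y \<Longrightarrow> t \<in> Y \<Longrightarrow> s \<noteq> t \<Longrightarrow> level s + 4 \<le> level t \<or> level t + 4 \<le> level s"
  shows "nP3 n \<prec> G"
proof -
  obtain h where hY: "\<And>i. i < n \<Longrightarrow> h i \<in> Y" and inj: "inj_on h {..<n}"
    using obtain_enumeration[OF Y(2,3)] by blast
  have near: "reach r x \<and> level s \<le> Suc (level x) \<and> level x \<le> Suc (level s)"
    if "s \<in> cuts" "x \<in> {parent s, s, beyond s}" for s x
    using that parent[OF that(1)] level_beyond[OF that(1)] reach_beyond[OF that(1)] cutsD[OF that(1)]
    by auto
  show ?thesis
  proof (rule nP3_induced_subI[of n "\<lambda>i. parent (h i)" h "\<lambda>i. beyond (h i)"])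
    fix i assume "i < n"
    then show "adj G (parent (h i)) (h i) \<and> adj G (h i) (beyond (h i)) \<and>
        \<not> adj G (parent (h i)) (beyond (h i)) \<and> parent (h i) \<noteq> beyond (h i)"
      using induced_P3_parent_beyond hY Y(1) by blast
  next
    fix i j x y
    assume ij: "i < n" "j < n" "i \<noteq> j"
      and x: "x \<in> {parent (h i), h i, beyond (h i)}" and y: "y \<in> {parent (h j), h j, beyond (h j)}"
    have "h i \<noteq> h j" using inj ij by (auto dest: inj_onD)
    then have far: "level (h i) + 4 \<le> level (h j) \<or> level (h j) + 4 \<le> level (h i)"
      using spread hY ij by blast
    have x_near: "reach r x" "level (h i) \<le> Suc (level x)" "level x \<le> Suc (level (h i))"
      using near[OF _ x] hY ij Y(1) by auto
    have y_near: "level (h j) \<le> Suc (level y)" "level y \<le> Suc (level (h j))"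
      using near[OF _ y] hY ij Y(1) by auto
    show "x \<noteq> y \<and> \<not> adj G x y"
    proof
      show "x \<noteq> y" using x_near y_near far by auto
      show "\<not> adj G x y"
        using dist_adj_bounds[OF x_near(1)] x_near y_near far by fastforce
    qed
  qed
qed

lemma Kn_star_if_level_clique:
  assumes K: "K \<subseteq> cuts" "finite K" "card K = n"
    and level: "\<And>s t. s \<in> K \<Longrightarrow> t \<in> K \<Longrightarrow> level s = level t"
    and clique: "\<And>s t. s \<in> K \<Longrightarrow> t \<in> K \<Longrightarrow> s \<noteq> t \<Longrightarrow> adj G s t"
  shows "Kn_star n \<prec> G"
proof -
  obtain h where hK: "\<And>i. i < n \<Longrightarrow> h i \<in> K" and inj: "inj_on h {..<n}"
    using obtain_enumeration[OF K(2,3)] by blast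
  have h: "h i \<in> cuts" "h j \<in> cuts" "level (h i) = level (h j)" "h i = h j \<longleftrightarrow> i = j"
    if "i < n" "j < n" for i j
    using hK that K(1) level inj by (auto dest: inj_onD)
  show ?thesis
  proof (rule Kn_star_induced_subI[of n h "\<lambda>i. beyond (h i)"])
    fix i j assume "i < n" "j < n" "i \<noteq> j"
    then show "h i \<noteq> h j \<and> adj G (h i) (h j)" using h clique hK by auto
  next
    fix i j assume "i < n" "j < n"
    then show "adj G (beyond (h i)) (h j) \<longleftrightarrow> i = j" "beyond (h i) \<noteq> h j"
      using beyond_on_level(1,2)[OF h(1-3)] h(4) by auto
  next
    fix i j assume "i < n" "j < n" "i \<noteq> j"
    then show "beyond (h i) \<noteq> beyond (h j) \<and> \<not> adj G (beyond (h i)) (beyond (h j))"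
      using beyond_on_level(3)[OF h(1-3)] h(4) by auto
  qed
qed

lemma K1n_star_if_common_parent:
  assumes Y: "Y \<subseteq> cuts" "finite Y" "card Y = n"
    and level: "\<And>s. s \<in> Y \<Longrightarrow> level s = L"
    and independent: "\<And>s t. s \<in> Y \<Longrightarrow> t \<in> Y \<Longrightarrow> \<not> adj G s t"
    and z: "reach r z" "Suc (level z) = L" "\<And>s. s \<in> Y \<Longrightarrow> adj G z s"
  shows "K1n_star n \<prec> G"
proof -
  obtain h where hY: "\<And>i. i < n \<Longrightarrow> h i \<in> Y" and inj: "inj_on h {..<n}"
    using obtain_enumeration[OF Y(2,3)] by blast
  have h: "h i \<in> cuts" "h j \<in> cuts" "level (h i) = level (h j)" "h i = h j \<longleftrightarrow> i = j"
    if "i < n" "j < n" for i j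
    using hY that Y(1) level inj by (auto dest: inj_onD)
  show ?thesis
  proof (rule K1n_star_induced_subI[of z n h "\<lambda>i. beyond (h i)"])
    show "z \<in> verts G" using reach_verts[OF z(1) root] .
  next
    fix i assume i: "i < n"
    have "level (h i) = L" using hY[OF i] level by blast
    then have "z \<noteq> h i" "level z \<le> level (h i)" using z(2) by auto
    then have "\<not> adj G (beyond (h i)) z" "z \<noteq> beyond (h i)"
      using beyond_not_adj[OF h(1)[OF i i] z(1)] level_beyond[OF h(1)[OF i i]] by auto
    then show "adj G z (h i) \<and> \<not> adj G z (beyond (h i)) \<and> z \<noteq> beyond (h i)"
      using z(3) hY[OF i] adj_commute by metis
  next
    fix i j assume "i < n" "j < n" "i \<noteq> j"
    then show "h i \<noteq> h j \<and> \<not> adj G (h i) (h j)" using h independent hY by auto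
  next
    fix i j assume "i < n" "j < n"
    then show "adj G (beyond (h i)) (h j) \<longleftrightarrow> i = j" "beyond (h i) \<noteq> h j"
      using beyond_on_level(1,2)[OF h(1-3)] h(4) by auto
  next
    fix i j assume "i < n" "j < n" "i \<noteq> j"
    then show "beyond (h i) \<noteq> beyond (h j) \<and> \<not> adj G (beyond (h i)) (beyond (h j))"
      using beyond_on_level(3)[OF h(1-3)] h(4) by auto
  qed
qed

lemma parent_paths_apart:
  assumes st: "s \<in> cuts" "t \<in> cuts" "s \<noteq> t" "level s = level t" "\<not> adj G s t"
    and parents: "\<not> adj G (parent s) t" "\<not> adj G (parent t) s" "parent s \<noteq> parent t"
      "\<not> adj G (parent s) (parent t)"
    and x: "x \<in> {parent s, s, beyond s}" and y: "y \<in> {parent t, t, beyond t}"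
  shows "x \<noteq> y \<and> \<not> adj G x y"
proof -
  have ps: "Suc (level (parent s)) = level s" "reach r (parent s)"
    and pt: "Suc (level (parent t)) = level t" "reach r (parent t)"
    using parent st(1,2) by auto
  have bs: "level (beyond s) = Suc (level s)" and bt: "level (beyond t) = Suc (level t)"
    using level_beyond st(1,2) by auto
  have "parent t \<noteq> s" "parent s \<noteq> t" using ps pt st(4) by auto
  have "\<not> adj G (beyond t) (parent s)" "\<not> adj G (beyond s) (parent t)"
    using beyond_not_adj[OF st(2) ps(2)] beyond_not_adj[OF st(1) pt(2)] ps pt st(4)
      \<open>parent s \<noteq> t\<close> \<open>parent t \<noteq> s\<close> by auto
  moreover have "\<not> adj G (beyond t) s" "\<not> adj G (beyond s) t" "beyond s \<noteq> t" "beyond t \<noteq> s"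
    "beyond s \<noteq> beyond t \<and> \<not> adj G (beyond s) (beyond t)"
    using beyond_on_level[OF st(2,1)] beyond_on_level[OF st(1,2,4)] st(3,4) by auto
  moreover have "parent s \<noteq> beyond t" "beyond s \<noteq> parent t"
    using ps pt bs bt st(4) by (metis Suc_n_not_le_n le_SucI order.refl)+
  moreover have "\<not> adj G s (parent t)"
    using parents(2) adj_commute by metis
  ultimately show ?thesis
    using x y st(3,5) parents \<open>parent s \<noteq> t\<close> \<open>parent t \<noteq> s\<close> adj_commute[of G "beyond t"]
    by auto
qed

lemma obstruction_if_parents_apart:
  assumes J: "J \<subseteq> cuts" "finite J" and level: "\<And>s. s \<in> J \<Longrightarrow> level s = L"
    and independent: "\<And>s t. s \<in> J \<Longrightarrow> t \<in> J \<Longrightarrow> \<not> adj G s t"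
    and apart: "\<And>s t. s \<in> J \<Longrightarrow> t \<in> J \<Longrightarrow> s \<noteq> t \<Longrightarrow> \<not> adj G (parent s) t"
    and ramsey: "\<And>(X :: 'a set) E. finite X \<Longrightarrow> R \<le> card X \<Longrightarrow>
      \<exists>Y\<subseteq>X. card Y = n \<and> (clique Y E \<or> indep Y E)"
    and "R \<le> card J"
  shows "Kn_star n \<prec> G \<or> nP3 n \<prec> G"
proof -
  have inj_parent: "inj_on parent J"
  proof (rule inj_onI, rule ccontr)
    fix s t assume "s \<in> J" "t \<in> J" "parent s = parent t" "s \<noteq> t"
    then show False using apart parent J(1) by (metis subsetD)
  qed
  then obtain Z where Z: "Z \<subseteq> parent ` J" "card Z = n" "clique Z (edges G) \<or> indep Z (edges G)"
    using ramsey[of "parent ` J" "edges G"] \<open>R \<le> card J\<close> J(2) by (auto simp: card_image)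
  define Y where "Y = {s\<in>J. parent s \<in> Z}"
  have "Y \<subseteq> J" "finite Y" using J(2) by (auto simp: Y_def)
  moreover have "parent ` Y = Z" using Z(1) by (auto simp: Y_def)
  ultimately have "card Y = n"
    using card_image[OF inj_on_subset[OF inj_parent]] Z(2) by metis
  then obtain h where hY: "\<And>i. i < n \<Longrightarrow> h i \<in> Y" and inj: "inj_on h {..<n}"
    using obtain_enumeration[OF \<open>finite Y\<close>] by blast
  have h: "h i \<in> J" "h i \<in> cuts" "parent (h i) \<in> Z" "level (h i) = L" if "i < n" for i
    using hY[OF that] J(1) level by (auto simp: Y_def)
  have h_neq: "h i \<noteq> h j" "parent (h i) \<noteq> parent (h j)" if "i < n" "j < n" "i \<noteq> j" for i j
    using inj inj_parent h(1) that by (auto dest: inj_onD)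
  from Z(3) show ?thesis
  proof
    assume clique: "clique Z (edges G)"
    have "Kn_star n \<prec> G"
    proof (rule Kn_star_induced_subI[of n "\<lambda>i. parent (h i)" h])
      fix i j assume "i < n" "j < n" "i \<noteq> j"
      then show "parent (h i) \<noteq> parent (h j) \<and> adj G (parent (h i)) (parent (h j))"
        using h_neq h(3) clique unfolding clique_def adj_def by blast
    next
      fix i j assume ij: "i < n" "j < n"
      show "adj G (h i) (parent (h j)) \<longleftrightarrow> i = j"
        using apart[OF h(1)[OF ij(2)] h(1)[OF ij(1)]] parent[OF h(2)[OF ij(1)]] h_neq(1)[OF ij]
        by (metis adj_commute)
      show "h i \<noteq> parent (h j)"
        using parent[OF h(2)[OF ij(2)]] h(4)[OF ij(1)] h(4)[OF ij(2)] by (metis n_not_Suc_n)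
    next
      fix i j assume "i < n" "j < n" "i \<noteq> j"
      then show "h i \<noteq> h j \<and> \<not> adj G (h i) (h j)"
        using h_neq independent h(1) by blast
    qed
    then show ?thesis ..
  next
    assume indep: "indep Z (edges G)"
    have "nP3 n \<prec> G"
    proof (rule nP3_induced_subI[of n "\<lambda>i. parent (h i)" h "\<lambda>i. beyond (h i)"])
      fix i assume "i < n"
      then show "adj G (parent (h i)) (h i) \<and> adj G (h i) (beyond (h i)) \<and>
          \<not> adj G (parent (h i)) (beyond (h i)) \<and> parent (h i) \<noteq> beyond (h i)"
        using induced_P3_parent_beyond h(2) by blast
    next
      fix i j x y
      assume ij: "i < n" "j < n" "i \<noteq> j"
        and x: "x \<in> {parent (h i), h i, beyond (h i)}" and y: "y \<in> {parent (h j), h j, beyond (h j)}"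
      show "x \<noteq> y \<and> \<not> adj G x y"
      proof (rule parent_paths_apart[OF h(2)[OF ij(1)] h(2)[OF ij(2)] h_neq(1)[OF ij] _ _ _ _
            h_neq(2)[OF ij] _ x y])
        show "level (h i) = level (h j)" using h(4) ij by simp
        show "\<not> adj G (h i) (h j)" using independent h(1) ij by blast
        show "\<not> adj G (parent (h i)) (h j)" "\<not> adj G (parent (h j)) (h i)"
          using apart h(1) h_neq(1) ij by auto
        show "\<not> adj G (parent (h i)) (parent (h j))"
          using indep h(3) h_neq(2)[OF ij] ij unfolding indep_def adj_def by blast
      qed
    qed
    then show ?thesis ..
  qed
qed

section \<open>Many cut vertices force an obstruction\<close>

lemma obstruction_if_level_independent:
  assumes Z: "Z \<subseteq> cuts" "finite Z" and level: "\<And>s. s \<in> Z \<Longrightarrow> level s = L"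
    and independent: "\<And>s t. s \<in> Z \<Longrightarrow> t \<in> Z \<Longrightarrow> \<not> adj G s t"
    and ramsey: "\<And>(X :: 'a set) E. finite X \<Longrightarrow> R \<le> card X \<Longrightarrow>
      \<exists>Y\<subseteq>X. card Y = n \<and> (clique Y E \<or> indep Y E)"
    and "0 < n" "R * (2 * n - 1) \<le> card Z"
  shows "\<exists>H\<in>obstructions n. H \<prec> G"
proof (cases "\<exists>s\<in>Z. n \<le> card {t\<in>Z. adj G (parent s) t}")
  case True
  then obtain s Y where s: "s \<in> Z" and Y: "Y \<subseteq> {t\<in>Z. adj G (parent s) t}" "card Y = n"
    by (meson obtain_subset_with_card_n)
  have "K1n_star n \<prec> G"
  proof (rule K1n_star_if_common_parent[of Y n L "parent s"])
    show "Y \<subseteq> cuts" using Y(1) Z(1) by auto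
    show "finite Y" using Y(1) Z(2) by (auto intro: finite_subset)
    show "Suc (level (parent s)) = L" "reach r (parent s)"
      using parent s Z(1) level by auto
    show "\<not> adj G t u" if "t \<in> Y" "u \<in> Y" for t u
      using that Y(1) independent by blast
  qed (use Y level in auto)
  then show ?thesis by (simp add: obstructions_def)
next
  case False
  then have "\<forall>s\<in>Z. card {t\<in>Z. adj G (parent s) t} \<le> n - 1"
    by (auto simp: not_le)
  then obtain J where J: "J \<subseteq> Z" "card Z \<le> card J * (2 * (n - 1) + 1)"
    "\<forall>s\<in>J. \<forall>t\<in>J. s \<noteq> t \<longrightarrow> \<not> adj G (parent s) t"
    using bounded_outdegree_independent_subset[OF Z(2), where C = "\<lambda>s t. adj G (parent s) t"]
    by blast
  have "2 * (n - 1) + 1 = 2 * n - 1" using \<open>0 < n\<close> by simp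
  then have "card Z \<le> card J * (2 * n - 1)" using J(2) by simp
  then have "R * (2 * n - 1) \<le> card J * (2 * n - 1)"
    using \<open>R * (2 * n - 1) \<le> card Z\<close> by linarith
  moreover have "0 < 2 * n - 1" using \<open>0 < n\<close> by simp
  ultimately have "R \<le> card J" by simp
  have "finite J" using J(1) Z(2) finite_subset by blast
  have "Kn_star n \<prec> G \<or> nP3 n \<prec> G"
  proof (rule obstruction_if_parents_apart[where L = L, OF _ \<open>finite J\<close> _ _ _ ramsey \<open>R \<le> card J\<close>])
    show "J \<subseteq> cuts" using J(1) Z(1) by auto
    show "level s = L" if "s \<in> J" for s using that J(1) level by auto
    show "\<not> adj G s t" if "s \<in> J" "t \<in> J" for s t using that J(1) independent by auto
    show "\<not> adj G (parent s) t" if "s \<in> J" "t \<in> J" "s \<noteq> t" for s t using that J(3) by auto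
  qed
  then show ?thesis by (auto simp: obstructions_def)
qed

lemma obstruction_if_level_large:
  assumes A: "A \<subseteq> cuts" "finite A" and level: "\<And>s. s \<in> A \<Longrightarrow> level s = L"
    and ramsey_n: "\<And>(X :: 'a set) E. finite X \<Longrightarrow> R1 \<le> card X \<Longrightarrow>
      \<exists>Y\<subseteq>X. card Y = n \<and> (clique Y E \<or> indep Y E)"
    and ramsey_m: "\<And>(X :: 'a set) E. finite X \<Longrightarrow> R2 \<le> card X \<Longrightarrow>
      \<exists>Y\<subseteq>X. card Y = m \<and> (clique Y E \<or> indep Y E)"
    and "0 < n" "n \<le> m" "R1 * (2 * n - 1) \<le> m" "R2 \<le> card A"
  shows "\<exists>H\<in>obstructions n. H \<prec> G"
proof -
  obtain Z where Z: "Z \<subseteq> A" "card Z = m" "clique Z (edges G) \<or> indep Z (edges G)"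
    using ramsey_m[OF A(2) \<open>R2 \<le> card A\<close>] by blast
  have "finite Z" using Z(1) A(2) finite_subset by blast
  from Z(3) show ?thesis
  proof
    assume "clique Z (edges G)"
    moreover obtain K where "K \<subseteq> Z" "card K = n"
      using obtain_subset_with_card_n Z(2) \<open>n \<le> m\<close> by metis
    ultimately have "Kn_star n \<prec> G"
    proof (intro Kn_star_if_level_clique[of K n])
      assume "clique Z (edges G)" "K \<subseteq> Z" "card K = n"
      then show "K \<subseteq> cuts" "finite K" "card K = n"
        using Z(1) A(1) \<open>finite Z\<close> finite_subset by auto
      show "level s = level t" if "s \<in> K" "t \<in> K" for s t
      proof -
        have "s \<in> A" "t \<in> A" using that \<open>K \<subseteq> Z\<close> Z(1) by auto
        then show ?thesis using level by simp
      qed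
      show "adj G s t" if "s \<in> K" "t \<in> K" "s \<noteq> t" for s t
        using that \<open>K \<subseteq> Z\<close> \<open>clique Z (edges G)\<close> unfolding clique_def adj_def by blast
    qed
    then show ?thesis by (simp add: obstructions_def)
  next
    assume "indep Z (edges G)"
    then have "\<not> adj G s t" if "s \<in> Z" "t \<in> Z" for s t
      using that not_adj_self[of s] unfolding indep_def adj_def by (cases "s = t") auto
    moreover have "Z \<subseteq> cuts" "level s = L" if "s \<in> Z" for s
      using that Z(1) A(1) level by auto
    ultimately show ?thesis
      using obstruction_if_level_independent[where L = L, OF _ \<open>finite Z\<close> _ _ ramsey_n \<open>0 < n\<close>]
        Z(1,2) A(1) \<open>R1 * (2 * n - 1) \<le> m\<close> by blast
  qed
qed

lemma obstruction_if_many_cuts: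
  assumes T: "T \<subseteq> cuts" "finite T" "4 * n * R2 \<le> card T"
    and ramsey_n: "\<And>(X :: 'a set) E. finite X \<Longrightarrow> R1 \<le> card X \<Longrightarrow>
      \<exists>Y\<subseteq>X. card Y = n \<and> (clique Y E \<or> indep Y E)"
    and ramsey_m: "\<And>(X :: 'a set) E. finite X \<Longrightarrow> R2 \<le> card X \<Longrightarrow>
      \<exists>Y\<subseteq>X. card Y = m \<and> (clique Y E \<or> indep Y E)"
    and "0 < n" "n \<le> m" "R1 * (2 * n - 1) \<le> m" "1 \<le> R2"
  shows "\<exists>H\<in>obstructions n. H \<prec> G"
proof (cases "4 * n \<le> card (level ` T)")
  case True
  then obtain Ls where Ls: "Ls \<subseteq> level ` T" "card Ls = n"
    "\<And>k l. k \<in> Ls \<Longrightarrow> l \<in> Ls \<Longrightarrow> k \<noteq> l \<Longrightarrow> k + 4 \<le> l \<or> l + 4 \<le> k"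
    using obtain_spread_subset[of "level ` T" 4 n] T(2) by auto
  let ?rep = "inv_into T level"
  have rep: "?rep l \<in> T" "level (?rep l) = l" if "l \<in> Ls" for l
    using that Ls(1) by (auto simp: inv_into_into f_inv_into_f)
  then have "inj_on ?rep Ls" by (metis inj_onI)
  moreover have "finite Ls" using Ls(1) T(2) finite_subset by blast
  ultimately have "nP3 n \<prec> G"
  proof (intro nP3_if_levels_spread[of "?rep ` Ls"])
    assume "inj_on ?rep Ls" "finite Ls"
    then show "?rep ` Ls \<subseteq> cuts" "finite (?rep ` Ls)" "card (?rep ` Ls) = n"
      using rep(1) Ls(2) T(1) by (auto simp: card_image)
    show "level s + 4 \<le> level t \<or> level t + 4 \<le> level s"
      if st: "s \<in> ?rep ` Ls" "t \<in> ?rep ` Ls" "s \<noteq> t" for s t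
    proof -
      obtain k l where kl: "k \<in> Ls" "l \<in> Ls" "s = ?rep k" "t = ?rep l"
        using st(1,2) by blast
      then have "k \<noteq> l" using st(3) by auto
      then show ?thesis using kl Ls(3) rep(2) by metis
    qed
  qed
  then show ?thesis by (simp add: obstructions_def)
next
  case False
  have "\<exists>L\<in>level ` T. R2 \<le> card {s\<in>T. level s = L}"
  proof (rule ccontr)
    assume "\<not> ?thesis"
    then have "card T \<le> card (level ` T) * (R2 - 1)"
      by (intro card_le_card_image_mult[OF T(2)]) auto
    also have "\<dots> \<le> (4 * n - 1) * R2"
      using False by (intro mult_le_mono) auto
    also have "\<dots> < 4 * n * R2"
      using \<open>0 < n\<close> \<open>1 \<le> R2\<close> by (intro mult_strict_right_mono) auto
    finally show False using T(3) by simp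
  qed
  then obtain L where L: "R2 \<le> card {s\<in>T. level s = L}" by blast
  show ?thesis
    by (rule obstruction_if_level_large[where L = L, OF _ _ _ ramsey_n ramsey_m assms(6-8) L])
      (use T(1,2) in auto)
qed

end

context simple_graph
begin

lemma nP3_if_cut_vertices_unreachable:
  assumes Y: "Y \<subseteq> cut_vertices G" "finite Y" "card Y = n"
    and unreachable: "\<And>s t. s \<in> Y \<Longrightarrow> t \<in> Y \<Longrightarrow> s \<noteq> t \<Longrightarrow> \<not> reach s t"
  shows "nP3 n \<prec> G"
proof -
  define ends where
    "ends s = (SOME p. adj G (fst p) s \<and> adj G s (snd p) \<and> \<not> adj G (fst p) (snd p) \<and> fst p \<noteq> snd p)"
    for s
  have ends: "adj G (fst (ends s)) s \<and> adj G s (snd (ends s)) \<and>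
      \<not> adj G (fst (ends s)) (snd (ends s)) \<and> fst (ends s) \<noteq> snd (ends s)" if "s \<in> Y" for s
  proof -
    have "sdeg G s \<ge> 2" using that Y(1) by (auto simp: cut_vertices_def)
    then obtain a b where "adj G a s" "adj G s b" "\<not> adj G a b" "a \<noteq> b"
      by (rule cut_vertex_induced_P3)
    then have "\<exists>p. adj G (fst p) s \<and> adj G s (snd p) \<and> \<not> adj G (fst p) (snd p) \<and> fst p \<noteq> snd p"
      by (intro exI[of _ "(a, b)"]) simp
    then show ?thesis
      unfolding ends_def by (rule someI_ex)
  qed
  obtain h where hY: "\<And>i. i < n \<Longrightarrow> h i \<in> Y" and inj: "inj_on h {..<n}"
    using obtain_enumeration[OF Y(2,3)] by blast
  have near: "reach (h i) x" if "i < n" "x \<in> {fst (ends (h i)), h i, snd (ends (h i))}" for i x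
    using that ends[OF hY[OF that(1)]] by (auto simp: adj_commute)
  show ?thesis
  proof (rule nP3_induced_subI[of n "\<lambda>i. fst (ends (h i))" h "\<lambda>i. snd (ends (h i))"])
    fix i assume "i < n"
    then show "adj G (fst (ends (h i))) (h i) \<and> adj G (h i) (snd (ends (h i))) \<and>
        \<not> adj G (fst (ends (h i))) (snd (ends (h i))) \<and> fst (ends (h i)) \<noteq> snd (ends (h i))"
      using ends hY by blast
  next
    fix i j x y
    assume ij: "i < n" "j < n" "i \<noteq> j"
      and x: "x \<in> {fst (ends (h i)), h i, snd (ends (h i))}"
      and y: "y \<in> {fst (ends (h j)), h j, snd (ends (h j))}"
    have "\<not> reach (h i) (h j)"
      using unreachable hY ij inj by (auto dest: inj_onD)
    moreover have "reach (h i) x" "reach y (h j)"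
      using near[OF ij(1) x] near[OF ij(2) y] reach_sym by auto
    ultimately show "x \<noteq> y \<and> \<not> adj G x y"
      using reach_step[of "h i" x y] rtranclp_trans[of "adj G" "h i" y "h j"] by blast
  qed
qed

lemma obstruction_if_many_cut_vertices:
  assumes ramsey_n: "\<And>(X :: 'a set) E. finite X \<Longrightarrow> R1 \<le> card X \<Longrightarrow>
      \<exists>Y\<subseteq>X. card Y = n \<and> (clique Y E \<or> indep Y E)"
    and ramsey_m: "\<And>(X :: 'a set) E. finite X \<Longrightarrow> R2 \<le> card X \<Longrightarrow>
      \<exists>Y\<subseteq>X. card Y = m \<and> (clique Y E \<or> indep Y E)"
    and "0 < n" "n \<le> m" "R1 * (2 * n - 1) \<le> m" "1 \<le> R2"
    and many: "n * (4 * n * R2 + 1) \<le> card (cut_vertices G)"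
  shows "\<exists>H\<in>obstructions n. H \<prec> G"
proof -
  let ?S = "cut_vertices G" and ?C = "component_of G"
  have "finite ?S" using finite_verts by (simp add: cut_vertices_def)
  have S_verts: "?S \<subseteq> verts G" by (auto simp: cut_vertices_def)
  show ?thesis
  proof (cases "n \<le> card (?C ` ?S)")
    case True
    then obtain Q where Q: "Q \<subseteq> ?C ` ?S" "card Q = n"
      by (meson obtain_subset_with_card_n)
    let ?rep = "inv_into ?S ?C"
    have rep: "?rep q \<in> ?S" "?C (?rep q) = q" if "q \<in> Q" for q
      using that Q(1) by (auto simp: inv_into_into f_inv_into_f)
    then have "inj_on ?rep Q" by (metis inj_onI)
    moreover have "finite Q" using Q(1) \<open>finite ?S\<close> finite_subset by blast
    ultimately have "nP3 n \<prec> G"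
    proof (intro nP3_if_cut_vertices_unreachable[of "?rep ` Q"])
      assume "inj_on ?rep Q" "finite Q"
      then show "?rep ` Q \<subseteq> ?S" "finite (?rep ` Q)" "card (?rep ` Q) = n"
        using rep(1) Q(2) by (auto simp: card_image)
      show "\<not> reach s t" if st: "s \<in> ?rep ` Q" "t \<in> ?rep ` Q" "s \<noteq> t" for s t
      proof -
        obtain p q where pq: "p \<in> Q" "q \<in> Q" "s = ?rep p" "t = ?rep q"
          using st(1,2) by blast
        then have "?C s \<noteq> ?C t" using st(3) rep(2) by auto
        then show ?thesis
          using component_of_eq_iff pq rep(1) S_verts by blast
      qed
    qed
    then show ?thesis by (simp add: obstructions_def)
  next
    case False
    have "\<exists>c\<in>?C ` ?S. 4 * n * R2 + 1 \<le> card {v\<in>?S. ?C v = c}"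
    proof (rule ccontr)
      assume "\<not> ?thesis"
      then have "card ?S \<le> card (?C ` ?S) * (4 * n * R2)"
        by (intro card_le_card_image_mult[OF \<open>finite ?S\<close>]) auto
      also have "\<dots> \<le> n * (4 * n * R2)"
        using False by (intro mult_le_mono1) simp
      also have "\<dots> < n * (4 * n * R2 + 1)"
        using \<open>0 < n\<close> by simp
      finally show False using many by simp
    qed
    then obtain r where r: "r \<in> ?S" "4 * n * R2 + 1 \<le> card {v\<in>?S. ?C v = ?C r}" by blast
    interpret rooted_graph G r
      using wf r(1) S_verts by unfold_locales auto
    define T where "T = {v\<in>?S. ?C v = ?C r} - {r}"
    have "T \<subseteq> cuts"
      using component_of_eq_iff r(1) S_verts
      by (auto simp: T_def cuts_def cut_vertices_def)
    moreover have "finite T" using \<open>finite ?S\<close> by (simp add: T_def)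
    moreover have "4 * n * R2 \<le> card T"
      using r by (simp add: T_def card_Diff_singleton_if)
    ultimately show ?thesis
      using obstruction_if_many_cuts[OF _ _ _ ramsey_n ramsey_m assms(3-6)] by blast
  qed
qed

end

lemma obtain_ramsey_bound:
  obtains R :: nat where "1 \<le> R"
    "\<And>(X :: 'a set) E. finite X \<Longrightarrow> R \<le> card X \<Longrightarrow> \<exists>Y\<subseteq>X. card Y = k \<and> (clique Y E \<or> indep Y E)"
  using ramsey2[where 'a = 'a, of k k] by (metis (no_types, lifting))

lemma cut_vertices_bounded_if_obstruction_free:
  assumes "0 < n"
  obtains c where "\<And>G :: 'a graph. wf_graph G \<Longrightarrow> \<forall>H\<in>obstructions n. \<not> H \<prec> G \<Longrightarrow>
    card (cut_vertices G) < c"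
proof -
  obtain R1 where R1: "\<And>(X :: 'a set) E. finite X \<Longrightarrow> R1 \<le> card X \<Longrightarrow>
      \<exists>Y\<subseteq>X. card Y = n \<and> (clique Y E \<or> indep Y E)"
    using obtain_ramsey_bound by blast
  define m where "m = max n (R1 * (2 * n - 1))"
  obtain R2 where R2: "1 \<le> R2" "\<And>(X :: 'a set) E. finite X \<Longrightarrow> R2 \<le> card X \<Longrightarrow>
      \<exists>Y\<subseteq>X. card Y = m \<and> (clique Y E \<or> indep Y E)"
    using obtain_ramsey_bound by blast
  show ?thesis
  proof (rule that[of "n * (4 * n * R2 + 1)"], rule ccontr)
    fix G :: "'a graph"
    assume G: "wf_graph G" "\<forall>H\<in>obstructions n. \<not> H \<prec> G"
      and "\<not> card (cut_vertices G) < n * (4 * n * R2 + 1)"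
    then have "n * (4 * n * R2 + 1) \<le> card (cut_vertices G)" by simp
    moreover have "n \<le> m" "R1 * (2 * n - 1) \<le> m" by (simp_all add: m_def)
    ultimately have "\<exists>H\<in>obstructions n. H \<prec> G"
      using simple_graph.obstruction_if_many_cut_vertices[OF simple_graph.intro[OF G(1)],
          where ?R1.0 = R1 and ?R2.0 = R2 and m = m and n = n, OF R1 R2(2) \<open>0 < n\<close> _ _ R2(1)]
      by blast
    then show False using G(2) by blast
  qed
qed

theorem corollary1p11:
  fixes \<H> :: "nat graph set"
  assumes "\<forall>H\<in>\<H>. wf_graph H"
  shows "(\<exists>c::nat. \<forall>G::nat graph. wf_graph G \<and> H_free \<H> G \<longrightarrow>
             card {v \<in> verts G. sdeg G v \<ge> 2} < c)
         \<longleftrightarrow> (\<exists>n::nat. n > 0 \<and> family_le \<H> {Kn_star n, nP3 n, K1n_star n})"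
  unfolding cut_vertices_def[symmetric] obstructions_def[symmetric]
proof
  assume "\<exists>c. \<forall>G::nat graph. wf_graph G \<and> H_free \<H> G \<longrightarrow> card (cut_vertices G) < c"
  then obtain c where c: "\<And>G::nat graph. wf_graph G \<Longrightarrow> H_free \<H> G \<Longrightarrow> card (cut_vertices G) < c"
    by blast
  have "family_le \<H> (obstructions (max c 2))"
    unfolding family_le_def
  proof
    fix H assume "H \<in> obstructions (max c 2)"
    then have "wf_graph H" "max c 2 \<le> card (cut_vertices H)"
      using obstruction_has_many_cut_vertices[of H "max c 2"] by simp_all
    then have "\<not> H_free \<H> H" using c by fastforce
    then show "\<exists>H1\<in>\<H>. H1 \<prec> H" by (simp add: H_free_def)
  qed
  then show "\<exists>n>0. family_le \<H> (obstructions n)" by (intro exI[of _ "max c 2"]) simp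
next
  assume "\<exists>n>0. family_le \<H> (obstructions n)"
  then obtain n where "0 < n" and below: "family_le \<H> (obstructions n)" by blast
  obtain c where c: "\<And>G :: nat graph. wf_graph G \<Longrightarrow> \<forall>H\<in>obstructions n. \<not> H \<prec> G \<Longrightarrow>
      card (cut_vertices G) < c"
    using cut_vertices_bounded_if_obstruction_free[OF \<open>0 < n\<close>] by blast
  have "\<forall>H\<in>obstructions n. \<not> H \<prec> G" if "H_free \<H> G" for G :: "nat graph"
    using that below induced_sub_trans unfolding H_free_def family_le_def by blast
  then show "\<exists>c. \<forall>G::nat graph. wf_graph G \<and> H_free \<H> G \<longrightarrow> card (cut_vertices G) < c"
    using c by blast
qed

end
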